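(* Let $\Sigma$ be an oriented piecewise smooth surface whose anisotropic mean curvature $\Lambda$ is constant on $\Sigma^*$. Then on $\Sigma^*$, $$L[\gamma]=\Lambda^2-2K_\Sigma/K_W,$$ where $\gamma$ denotes $\gamma\circ\nu$.
   Context: $\Sigma^*$ is the union of the smooth faces of $\Sigma$, $\nu$ its unit normal. $\gamma$ is a positive $C^3$ function on $S^2$, $D\gamma$ its gradient on $S^2$, $\tilde\gamma$ its degree-one homogeneous extension, $A=D^2\gamma+\gamma I$ (evaluated at $\nu$). The Cahn–Hoffman field is $\xi=\nabla\tilde\gamma(\nu)=D\gamma_\nu+\gamma\nu$, $d\xi=A\,d\nu$, and $\Lambda=-\nabla\cdot\xi$. The Jacobi operator is $L[\psi]=\nabla\cdot(A\nabla\psi)+\langle d\xi,d\nu\rangle\psi$, which for a variation $\delta X=V+\psi\nu$ ($V$ tangent) gives $\delta\Lambda=L[\psi]+\nabla\Lambda\cdot V$. $K_\Sigma$ is the Gauss curvature of $\Sigma$ and $K_W=1/\det A$ is the Gauss curvature of the Wulff shape at $\xi$, so $K_\Sigma/K_W=\det d\xi$. *)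

theory Defs
  imports "HOL-Analysis.Analysis"
begin

text \<open>Local setting: a smooth face of the piecewise smooth surface is given by a
  regular parametrization X : U \<subseteq> R^2 \<rightarrow> R^3 (U open), oriented by the
  normalized cross product of the coordinate tangent vectors.\<close>

fun Ck :: "nat \<Rightarrow> ('a::real_normed_vector \<Rightarrow> 'b::real_normed_vector) \<Rightarrow> 'a set \<Rightarrow> bool" where
  "Ck 0 f S = continuous_on S f"
| "Ck (Suc k) f S = (f differentiable_on S \<and> (\<forall>v. Ck k (\<lambda>x. frechet_derivative f (at x) v) S))"

definition ev :: "nat \<Rightarrow> real \<times> real" where
  "ev i = (if i = 0 then (1, 0) else (0, 1))"

definition pd :: "nat \<Rightarrow> (real \<times> real \<Rightarrow> 'b::real_normed_vector) \<Rightarrow> real \<times> real \<Rightarrow> 'b" where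
  "pd i f x = frechet_derivative f (at x) (ev i)"

definition gmet :: "(real \<times> real \<Rightarrow> real^3) \<Rightarrow> nat \<Rightarrow> nat \<Rightarrow> real \<times> real \<Rightarrow> real" where
  "gmet X i j x = pd i X x \<bullet> pd j X x"

definition gdet :: "(real \<times> real \<Rightarrow> real^3) \<Rightarrow> real \<times> real \<Rightarrow> real" where
  "gdet X x = gmet X 0 0 x * gmet X 1 1 x - gmet X 0 1 x * gmet X 1 0 x"

definition ginv :: "(real \<times> real \<Rightarrow> real^3) \<Rightarrow> nat \<Rightarrow> nat \<Rightarrow> real \<times> real \<Rightarrow> real" where
  "ginv X i j x =
     (if i = 0 \<and> j = 0 then gmet X 1 1 x / gdet X x
      else if i = 1 \<and> j = 1 then gmet X 0 0 x / gdet X x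
      else - gmet X i j x / gdet X x)"

definition nrm :: "(real \<times> real \<Rightarrow> real^3) \<Rightarrow> real \<times> real \<Rightarrow> real^3" where
  "nrm X x = (1 / norm (cross3 (pd 0 X x) (pd 1 X x))) *\<^sub>R cross3 (pd 0 X x) (pd 1 X x)"

definition sgrad :: "(real \<times> real \<Rightarrow> real^3) \<Rightarrow> (real \<times> real \<Rightarrow> real) \<Rightarrow> real \<times> real \<Rightarrow> real^3" where
  "sgrad X f x = (\<Sum>i<2. \<Sum>j<2. (ginv X i j x * pd j f x) *\<^sub>R pd i X x)"

definition sdiv :: "(real \<times> real \<Rightarrow> real^3) \<Rightarrow> (real \<times> real \<Rightarrow> real^3) \<Rightarrow> real \<times> real \<Rightarrow> real" where
  "sdiv X Y x = (\<Sum>i<2. \<Sum>j<2. ginv X i j x * (pd i Y x \<bullet> pd j X x))"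

definition dinner :: "(real \<times> real \<Rightarrow> real^3) \<Rightarrow> (real \<times> real \<Rightarrow> real^3) \<Rightarrow> (real \<times> real \<Rightarrow> real^3) \<Rightarrow> real \<times> real \<Rightarrow> real" where
  "dinner X Y Z x = (\<Sum>i<2. \<Sum>j<2. ginv X i j x * (pd i Y x \<bullet> pd j Z x))"

text \<open>determinant of the endomorphism of the tangent plane T_x sending the
  coordinate tangent vector pd i X x to V i (V i assumed tangent)\<close>
definition tdet :: "(real \<times> real \<Rightarrow> real^3) \<Rightarrow> (nat \<Rightarrow> real^3) \<Rightarrow> real \<times> real \<Rightarrow> real" where
  "tdet X V x =
     (let M = (\<lambda>k i. \<Sum>j<2. ginv X k j x * (V i \<bullet> pd j X x))
      in M 0 0 * M 1 1 - M 0 1 * M 1 0)"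

definition grad3 :: "(real^3 \<Rightarrow> real) \<Rightarrow> real^3 \<Rightarrow> real^3" where
  "grad3 F y = (\<chi> i. frechet_derivative F (at y) (axis i 1))"

definition gext :: "(real^3 \<Rightarrow> real) \<Rightarrow> real^3 \<Rightarrow> real" where
  "gext \<gamma> y = norm y * \<gamma> ((1 / norm y) *\<^sub>R y)"

text \<open>A = D^2\<gamma> + \<gamma> I at the unit vector n, realised as the Hessian of the
  homogeneous extension at n (acting on the tangent plane T_n S^2)\<close>
definition Amap :: "(real^3 \<Rightarrow> real) \<Rightarrow> real^3 \<Rightarrow> real^3 \<Rightarrow> real^3" where
  "Amap \<gamma> n w = frechet_derivative (grad3 (gext \<gamma>)) (at n) w"

definition cahn_hoffman :: "(real^3 \<Rightarrow> real) \<Rightarrow> (real \<times> real \<Rightarrow> real^3) \<Rightarrow> real \<times> real \<Rightarrow> real^3" where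
  "cahn_hoffman \<gamma> X x = grad3 (gext \<gamma>) (nrm X x)"

definition aniso_mean_curv :: "(real^3 \<Rightarrow> real) \<Rightarrow> (real \<times> real \<Rightarrow> real^3) \<Rightarrow> real \<times> real \<Rightarrow> real" where
  "aniso_mean_curv \<gamma> X x = - sdiv X (cahn_hoffman \<gamma> X) x"

definition jacobi :: "(real^3 \<Rightarrow> real) \<Rightarrow> (real \<times> real \<Rightarrow> real^3) \<Rightarrow> (real \<times> real \<Rightarrow> real) \<Rightarrow> real \<times> real \<Rightarrow> real" where
  "jacobi \<gamma> X \<psi> x =
     sdiv X (\<lambda>y. Amap \<gamma> (nrm X y) (sgrad X \<psi> y)) x
     + dinner X (cahn_hoffman \<gamma> X) (nrm X) x * \<psi> x"

definition gauss_curv :: "(real \<times> real \<Rightarrow> real^3) \<Rightarrow> real \<times> real \<Rightarrow> real" where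
  "gauss_curv X x = tdet X (\<lambda>i. pd i (nrm X) x) x"

text \<open>Gauss curvature of the Wulff shape at \<xi>: K_W = 1 / det A\<close>
definition wulff_curv :: "(real^3 \<Rightarrow> real) \<Rightarrow> (real \<times> real \<Rightarrow> real^3) \<Rightarrow> real \<times> real \<Rightarrow> real" where
  "wulff_curv \<gamma> X x = 1 / tdet X (\<lambda>i. Amap \<gamma> (nrm X x) (pd i X x)) x"

end

theory Submission
  imports Defs
begin

text \<open>
  Since \<xi> = \<nabla>\<gamma>~ \<circ> \<nu>, we have
  d\<xi> = A d\<nu>, and the gradient of \<gamma> \<circ> \<nu> is \<xi> \<cdot> d\<nu>; hence A \<nabla>(\<gamma> \<circ> \<nu>) = d\<xi>(\<xi>_T), where
  \<xi>_T = \<Sum>m. t_m X_m is the tangential part of \<xi>. Expanding div(d\<xi>(\<xi>_T)), the terms with second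
  derivatives of \<xi> combine, by symmetry of mixed partials, into \<xi>_T \<cdot> \<nabla>(div \<xi>), which vanishes
  because \<Lambda> = -div \<xi> is constant. The normal component \<xi> \<cdot> \<nu> = \<gamma>(\<nu>) (Euler's relation for the
  1-homogeneous \<gamma>~) produces a term cancelling \<langle>d\<xi>, d\<nu>\<rangle>\<gamma>. What remains is
  tr(d\<xi> \<circ> d\<xi>) = (tr d\<xi>)^2 - 2 det d\<xi> = \<Lambda>^2 - 2 det d\<xi>, and det d\<xi> = det d\<nu> \<cdot> det A = K_\<Sigma>/K_W.
\<close>

section \<open>Partial derivatives in the parameter plane\<close>

lemma sum_lessThan_2: "(\<Sum>i<(2::nat). f i) = f 0 + f 1"
  by (simp add: numeral_2_eq_2)

lemma pd_eq_of_has_derivative: "(f has_derivative f') (at x) \<Longrightarrow> pd i f x = f' (ev i)"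
  unfolding pd_def by (metis frechet_derivative_at)

lemma pd_cong_open:
  "open S \<Longrightarrow> x \<in> S \<Longrightarrow> (\<And>y. y \<in> S \<Longrightarrow> f y = g y) \<Longrightarrow> f differentiable at x \<Longrightarrow> pd i f x = pd i g x"
  unfolding pd_def using frechet_derivative_transform_within_open by metis

lemma differentiable_cong_open:
  "open S \<Longrightarrow> x \<in> S \<Longrightarrow> (\<And>y. y \<in> S \<Longrightarrow> f y = g y) \<Longrightarrow> f differentiable at x \<Longrightarrow> g differentiable at x"
  unfolding differentiable_def using has_derivative_transform_within_open by metis

lemmas has_derivative_frechet = frechet_derivative_works[THEN iffD1]

lemma pd_bilinear:
  fixes f :: "real \<times> real \<Rightarrow> 'a::real_normed_vector" and g :: "real \<times> real \<Rightarrow> 'b::real_normed_vector"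
    and prod :: "'a \<Rightarrow> 'b \<Rightarrow> 'c::real_normed_vector"
  assumes "bounded_bilinear prod" "f differentiable at x" "g differentiable at x"
  shows "pd i (\<lambda>y. prod (f y) (g y)) x = prod (pd i f x) (g x) + prod (f x) (pd i g x)"
proof -
  have "((\<lambda>y. prod (f y) (g y)) has_derivative
      (\<lambda>h. prod (f x) (frechet_derivative g (at x) h) + prod (frechet_derivative f (at x) h) (g x))) (at x)"
    using bounded_bilinear.FDERIV[OF assms(1) has_derivative_frechet[OF assms(2)] has_derivative_frechet[OF assms(3)]] .
  then show ?thesis unfolding pd_def by (subst pd_eq_of_has_derivative[unfolded pd_def]) (auto simp: add.commute)
qed

lemma differentiable_bilinear:
  fixes f :: "'d::real_normed_vector \<Rightarrow> 'a::real_normed_vector" and g :: "'d \<Rightarrow> 'b::real_normed_vector"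
    and prod :: "'a \<Rightarrow> 'b \<Rightarrow> 'c::real_normed_vector"
  assumes "bounded_bilinear prod" "f differentiable at x" "g differentiable at x"
  shows "(\<lambda>y. prod (f y) (g y)) differentiable at x"
  using bounded_bilinear.FDERIV[OF assms(1) has_derivative_frechet[OF assms(2)] has_derivative_frechet[OF assms(3)]]
  unfolding differentiable_def by blast

lemma pd_diff: "f differentiable at x \<Longrightarrow> g differentiable at x \<Longrightarrow> pd i (\<lambda>y. f y - g y) x = pd i f x - pd i g x"
  by (subst pd_eq_of_has_derivative[OF has_derivative_diff[OF has_derivative_frechet has_derivative_frechet]]) (auto simp: pd_def)

lemma pd_minus: "f differentiable at x \<Longrightarrow> pd i (\<lambda>y. - f y) x = - pd i f x"
  by (subst pd_eq_of_has_derivative[OF has_derivative_minus[OF has_derivative_frechet]]) (auto simp: pd_def)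

lemma pd_const: "pd i (\<lambda>y. c) x = 0"
  by (subst pd_eq_of_has_derivative[OF has_derivative_const]) auto

lemma pd_sum: "finite A \<Longrightarrow> (\<And>a. a \<in> A \<Longrightarrow> f a differentiable at x) \<Longrightarrow> pd i (\<lambda>y. \<Sum>a\<in>A. f a y) x = (\<Sum>a\<in>A. pd i (f a) x)"
  by (subst pd_eq_of_has_derivative[OF has_derivative_sum[OF has_derivative_frechet]]) (auto simp: pd_def)

lemma pd_chain:
  assumes "f differentiable at x" "g differentiable at (f x)"
  shows "pd i (\<lambda>y. g (f y)) x = frechet_derivative g (at (f x)) (pd i f x)"
proof -
  have "((g \<circ> f) has_derivative (frechet_derivative g (at (f x)) \<circ> frechet_derivative f (at x))) (at x)"
    by (rule diff_chain_at[OF has_derivative_frechet[OF assms(1)] has_derivative_frechet[OF assms(2)]])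
  then show ?thesis unfolding pd_def by (subst pd_eq_of_has_derivative[unfolded pd_def]) (auto simp: o_def)
qed

lemma pd_eq_0_if_constant_on:
  assumes "open S" "x \<in> S" "\<And>y. y \<in> S \<Longrightarrow> f y = c"
  shows "pd i f x = 0"
proof -
  have "pd i (\<lambda>y. c) x = pd i f x"
    by (rule pd_cong_open[OF assms(1,2)]) (auto simp: assms(3))
  then show ?thesis by (simp add: pd_const)
qed

lemma pd_eq_fun: "pd i f = (\<lambda>y. frechet_derivative f (at y) (ev i))"
  by (simp add: pd_def fun_eq_iff)

lemma pd_index_ne_0: "i \<noteq> 0 \<Longrightarrow> pd i f = pd 1 f"
  by (simp add: pd_def ev_def fun_eq_iff)

lemma frechet_derivative_inverse: "(r::real) \<noteq> 0 \<Longrightarrow> frechet_derivative inverse (at r) h = - (inverse r * h * inverse r)"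
  using frechet_derivative_at[OF has_derivative_inverse'[of r UNIV]] by metis

lemma frechet_derivative_norm: "(z::'a::real_inner) \<noteq> 0 \<Longrightarrow> frechet_derivative norm (at z) h = h \<bullet> sgn z"
  using frechet_derivative_at[OF has_derivative_norm[of z]] by metis

lemma pd_div:
  fixes f g :: "real \<times> real \<Rightarrow> real"
  assumes f: "f differentiable at x" and g: "g differentiable at x" and gx: "g x \<noteq> 0"
  shows "pd i (\<lambda>y. f y / g y) x = (pd i f x * g x - f x * pd i g x) / (g x)^2"
proof -
  have di: "inverse differentiable at (g x)"
    using has_derivative_inverse'[OF gx] unfolding differentiable_def by blast
  have "pd i (\<lambda>y. f y / g y) x = pd i (\<lambda>y. f y * inverse (g y)) x" by (simp add: divide_inverse)
  also have "\<dots> = pd i f x * inverse (g x) + f x * pd i (\<lambda>y. inverse (g y)) x"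
    using g gx by (intro pd_bilinear[OF bounded_bilinear_mult f]) simp
  also have "pd i (\<lambda>y. inverse (g y)) x = - (inverse (g x) * pd i g x * inverse (g x))"
    by (simp add: pd_chain[OF g di] frechet_derivative_inverse[OF gx])
  finally show ?thesis using gx by (simp add: field_simps power2_eq_square)
qed

lemma Ck3_differentiable:
  assumes "Ck 3 f S" "open S" "y \<in> S"
  shows "f differentiable at y"
    "(\<lambda>x. frechet_derivative f (at x) v) differentiable at y"
    "(\<lambda>x. frechet_derivative (\<lambda>x. frechet_derivative f (at x) v) (at x) w) differentiable at y"
  using assms by (auto simp: numeral_3_eq_3 differentiable_on_eq_differentiable_at)

lemma bounded_bilinear_cross3: "bounded_bilinear cross3"
  using bilinear_cross bilinear_conv_bounded_bilinear by blast

section \<open>Symmetry of mixed partial derivatives\<close>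

lemma add_mem_ball: "norm v < r \<Longrightarrow> x + v \<in> ball x r"
  by (metis add_diff_cancel_left' dist_norm dist_commute mem_ball)

lemma has_derivative_second_difference:
  fixes f :: "'a::real_normed_vector \<Rightarrow> 'b::real_normed_vector"
  assumes f1: "f differentiable at (x + s *\<^sub>R u + t *\<^sub>R w)" and f2: "f differentiable at (x + s *\<^sub>R u)"
  shows "((\<lambda>r. f (x + r *\<^sub>R u + t *\<^sub>R w) - f (x + r *\<^sub>R u) - (r * t) *\<^sub>R c) has_derivative
           (\<lambda>h. h *\<^sub>R (frechet_derivative f (at (x + s *\<^sub>R u + t *\<^sub>R w)) u
                      - frechet_derivative f (at (x + s *\<^sub>R u)) u - t *\<^sub>R c))) (at s)"
proof -
  have l1: "linear (frechet_derivative f (at (x + s *\<^sub>R u + t *\<^sub>R w)))"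
    using linear_frechet_derivative f1 by blast
  have l2: "linear (frechet_derivative f (at (x + s *\<^sub>R u)))"
    using linear_frechet_derivative f2 by blast
  have i1: "((\<lambda>r. x + r *\<^sub>R u + t *\<^sub>R w) has_derivative (\<lambda>h. h *\<^sub>R u)) (at s)"
    by (auto intro!: derivative_eq_intros)
  have i2: "((\<lambda>r. x + r *\<^sub>R u) has_derivative (\<lambda>h. h *\<^sub>R u)) (at s)"
    by (auto intro!: derivative_eq_intros)
  have c1: "((\<lambda>r. f (x + r *\<^sub>R u + t *\<^sub>R w)) has_derivative
       (\<lambda>h. frechet_derivative f (at (x + s *\<^sub>R u + t *\<^sub>R w)) (h *\<^sub>R u))) (at s)"
    using diff_chain_at[OF i1 has_derivative_frechet[OF f1]] by (simp add: o_def)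
  have c2: "((\<lambda>r. f (x + r *\<^sub>R u)) has_derivative
       (\<lambda>h. frechet_derivative f (at (x + s *\<^sub>R u)) (h *\<^sub>R u))) (at s)"
    using diff_chain_at[OF i2 has_derivative_frechet[OF f2]] by (simp add: o_def)
  have c3: "((\<lambda>r. (r * t) *\<^sub>R c) has_derivative (\<lambda>h. (h * t) *\<^sub>R c)) (at s)"
    by (auto intro!: derivative_eq_intros)
  have "((\<lambda>r. f (x + r *\<^sub>R u + t *\<^sub>R w) - f (x + r *\<^sub>R u) - (r * t) *\<^sub>R c) has_derivative
      (\<lambda>h. frechet_derivative f (at (x + s *\<^sub>R u + t *\<^sub>R w)) (h *\<^sub>R u)
         - frechet_derivative f (at (x + s *\<^sub>R u)) (h *\<^sub>R u) - (h * t) *\<^sub>R c)) (at s)"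
    by (intro has_derivative_diff c1 c2 c3)
  then show ?thesis
    by (simp only: linear_scale[OF l1] linear_scale[OF l2]) (simp add: algebra_simps)
qed

lemma has_derivative_increment_bound:
  assumes ad: "(a has_derivative A) (at x)" and e: "0 < e"
  shows "\<exists>d>0. \<forall>y1 y2. norm (y1 - x) < d \<longrightarrow> norm (y2 - x) < d \<longrightarrow>
           norm (a y1 - a y2 - A (y1 - y2)) \<le> e * (norm (y1 - x) + norm (y2 - x))"
proof -
  have lA: "linear A" using ad has_derivative_linear by blast
  from ad[unfolded has_derivative_at'] e obtain d where d: "d > 0"
    "\<forall>x'. 0 < norm (x' - x) \<and> norm (x' - x) < d \<longrightarrow> norm (a x' - a x - A (x' - x)) / norm (x' - x) < e"
    by blast
  have bnd: "norm (a y - a x - A (y - x)) \<le> e * norm (y - x)" if "norm (y - x) < d" for y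
  proof (cases "y = x")
    case True then show ?thesis using linear_0[OF lA] by simp
  next
    case False
    then have "norm (a y - a x - A (y - x)) / norm (y - x) < e" using d(2) that by auto
    then show ?thesis using False by (simp add: divide_less_eq less_imp_le mult.commute)
  qed
  have "norm (a y1 - a y2 - A (y1 - y2)) \<le> e * (norm (y1 - x) + norm (y2 - x))"
    if "norm (y1 - x) < d" "norm (y2 - x) < d" for y1 y2
  proof -
    have "a y1 - a y2 - A (y1 - y2) = (a y1 - a x - A (y1 - x)) - (a y2 - a x - A (y2 - x))"
      by (simp add: linear_diff[OF lA] algebra_simps)
    then have "norm (a y1 - a y2 - A (y1 - y2)) \<le> norm (a y1 - a x - A (y1 - x)) + norm (a y2 - a x - A (y2 - x))"
      by (metis norm_triangle_ineq4)
    also have "\<dots> \<le> e * (norm (y1 - x) + norm (y2 - x))"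
      using bnd that by (simp add: distrib_left add_mono)
    finally show ?thesis .
  qed
  then show ?thesis using d(1) by blast
qed

lemma second_difference_approx:
  fixes f :: "'a::real_normed_vector \<Rightarrow> 'b::real_inner"
  assumes r: "0 < r" and fd: "\<And>y. y \<in> ball x r \<Longrightarrow> f differentiable at y"
    and ad: "((\<lambda>y. frechet_derivative f (at y) u) has_derivative A) (at x)"
    and e: "0 < e"
  shows "\<exists>d>0. \<forall>t. 0 < t \<and> t < d \<longrightarrow>
     norm (f (x + t *\<^sub>R u + t *\<^sub>R w) - f (x + t *\<^sub>R u) - f (x + t *\<^sub>R w) + f x - (t * t) *\<^sub>R A w) \<le> e * (t * t)"
proof -
  define a where "a y = frechet_derivative f (at y) u" for y
  define K where "K = norm u + norm w + 1"
  have K: "K > 0" "norm u \<le> K" "norm w \<le> K" unfolding K_def by (smt (verit) norm_ge_zero)+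
  have lA: "linear A" using ad has_derivative_linear by blast
  obtain d1 where d1: "d1 > 0" and inc: "\<And>y1 y2. norm (y1 - x) < d1 \<Longrightarrow> norm (y2 - x) < d1 \<Longrightarrow>
      norm (a y1 - a y2 - A (y1 - y2)) \<le> e / (4 * K) * (norm (y1 - x) + norm (y2 - x))"
    using has_derivative_increment_bound[OF ad[folded a_def], of "e / (4 * K)"] e K by auto
  define d where "d = min d1 r / (2 * K)"
  have dpos: "d > 0" unfolding d_def using d1 r K by simp
  show ?thesis
  proof (intro exI[of _ d] conjI allI impI dpos)
    fix t assume t: "0 < t \<and> t < d"
    have tK: "2 * t * K < d1" "2 * t * K < r"
      using t K unfolding d_def by (auto simp: field_simps)
    have nb: "norm (s *\<^sub>R u + t' *\<^sub>R w) \<le> 2 * t * K" if "0 \<le> s" "s \<le> t" "0 \<le> t'" "t' \<le> t" for s t'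
    proof -
      have "norm (s *\<^sub>R u + t' *\<^sub>R w) \<le> s * norm u + t' * norm w"
        using norm_triangle_ineq[of "s *\<^sub>R u" "t' *\<^sub>R w"] that by simp
      also have "\<dots> \<le> t * K + t * K"
        using that K t by (intro add_mono mult_mono) auto
      finally show ?thesis by (simp add: algebra_simps)
    qed
    define \<phi> where "\<phi> s = f (x + s *\<^sub>R u + t *\<^sub>R w) - f (x + s *\<^sub>R u) - (s * t) *\<^sub>R A w" for s
    have deriv: "(\<phi> has_derivative (\<lambda>h. h *\<^sub>R (a (x + s *\<^sub>R u + t *\<^sub>R w) - a (x + s *\<^sub>R u) - t *\<^sub>R A w))) (at s)"
      if s: "0 \<le> s" "s \<le> t" for s
    proof -
      have "x + s *\<^sub>R u + t *\<^sub>R w \<in> ball x r"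
        using nb[OF s, of t] t tK add_mem_ball[of "s *\<^sub>R u + t *\<^sub>R w" r x] by (simp add: add.assoc)
      moreover have "x + s *\<^sub>R u \<in> ball x r"
        using nb[OF s, of 0] t tK add_mem_ball[of "s *\<^sub>R u" r x] by simp
      ultimately show ?thesis
        unfolding \<phi>_def a_def by (intro has_derivative_second_difference fd)
    qed
    have cont: "continuous_on {0..t} \<phi>"
      by (rule has_derivative_continuous_on) (auto intro: has_derivative_at_withinI deriv)
    obtain s where s: "s \<in> {0<..<t}"
      and mv: "norm (\<phi> t - \<phi> 0) \<le> norm ((t - 0) *\<^sub>R (a (x + s *\<^sub>R u + t *\<^sub>R w) - a (x + s *\<^sub>R u) - t *\<^sub>R A w))"
      using mvt_general[of 0 t \<phi>, OF _ cont deriv] t by force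
    define y1 where "y1 = x + s *\<^sub>R u + t *\<^sub>R w"
    define y2 where "y2 = x + s *\<^sub>R u"
    have s': "0 \<le> s" "s \<le> t" using s by auto
    have ny1: "norm (y1 - x) \<le> 2 * t * K" unfolding y1_def using nb[OF s', of t] t by (simp add: add.assoc)
    have ny2: "norm (y2 - x) \<le> 2 * t * K" unfolding y2_def using nb[OF s', of 0] t by simp
    have "A (y1 - y2) = t *\<^sub>R A w"
      unfolding y1_def y2_def by (simp add: linear_scale[OF lA])
    moreover have "norm (y1 - x) < d1" "norm (y2 - x) < d1" using ny1 ny2 tK by auto
    ultimately have "norm (a y1 - a y2 - t *\<^sub>R A w) \<le> e / (4 * K) * (norm (y1 - x) + norm (y2 - x))"
      using inc by metis
    also have "\<dots> \<le> e / (4 * K) * (4 * t * K)"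
      using e K ny1 ny2 by (intro mult_left_mono) auto
    also have "\<dots> = e * t" using K by (simp add: field_simps)
    finally have nA: "norm (a y1 - a y2 - t *\<^sub>R A w) \<le> e * t" .
    have "norm (\<phi> t - \<phi> 0) \<le> t * norm (a y1 - a y2 - t *\<^sub>R A w)"
      using mv t by (simp add: y1_def y2_def)
    also have "\<dots> \<le> t * (e * t)" using nA t by (intro mult_left_mono) auto
    finally have "norm (\<phi> t - \<phi> 0) \<le> t * (e * t)" .
    moreover have "\<phi> t - \<phi> 0 = f (x + t *\<^sub>R u + t *\<^sub>R w) - f (x + t *\<^sub>R u) - f (x + t *\<^sub>R w) + f x - (t * t) *\<^sub>R A w"
      unfolding \<phi>_def by (simp add: algebra_simps)
    ultimately show "norm (f (x + t *\<^sub>R u + t *\<^sub>R w) - f (x + t *\<^sub>R u) - f (x + t *\<^sub>R w) + f x - (t * t) *\<^sub>R A w) \<le> e * (t * t)"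
      by (simp add: mult.commute mult.left_commute)
  qed
qed

lemma second_difference_tendsto:
  fixes f :: "'a::real_normed_vector \<Rightarrow> 'b::real_inner"
  assumes "0 < r" "\<And>y. y \<in> ball x r \<Longrightarrow> f differentiable at y"
    and "((\<lambda>y. frechet_derivative f (at y) u) has_derivative A) (at x)"
  shows "((\<lambda>t. (1 / (t * t)) *\<^sub>R (f (x + t *\<^sub>R u + t *\<^sub>R w) - f (x + t *\<^sub>R u) - f (x + t *\<^sub>R w) + f x))
           \<longlongrightarrow> A w) (at_right 0)"
proof (rule tendstoI)
  fix e :: real assume "0 < e"
  then obtain d where "d > 0" and d: "\<forall>t. 0 < t \<and> t < d \<longrightarrow>
     norm (f (x + t *\<^sub>R u + t *\<^sub>R w) - f (x + t *\<^sub>R u) - f (x + t *\<^sub>R w) + f x - (t * t) *\<^sub>R A w) \<le> e / 2 * (t * t)"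
    using second_difference_approx[OF assms, of "e / 2" w] by auto
  have "dist ((1 / (t * t)) *\<^sub>R (f (x + t *\<^sub>R u + t *\<^sub>R w) - f (x + t *\<^sub>R u) - f (x + t *\<^sub>R w) + f x)) (A w) < e"
    if t: "0 < t" "t < d" for t
  proof -
    let ?Q = "f (x + t *\<^sub>R u + t *\<^sub>R w) - f (x + t *\<^sub>R u) - f (x + t *\<^sub>R w) + f x"
    have "(1 / (t * t)) *\<^sub>R ?Q - A w = (1 / (t * t)) *\<^sub>R (?Q - (t * t) *\<^sub>R A w)"
      using t by (simp add: algebra_simps)
    then have "dist ((1 / (t * t)) *\<^sub>R ?Q) (A w) = norm (?Q - (t * t) *\<^sub>R A w) / (t * t)"
      by (simp add: dist_norm divide_inverse_commute)
    also have "\<dots> \<le> e / 2" using d t by (simp add: divide_le_eq)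
    finally show ?thesis using \<open>0 < e\<close> by simp
  qed
  then show "\<forall>\<^sub>F t in at_right 0. dist ((1 / (t * t)) *\<^sub>R (f (x + t *\<^sub>R u + t *\<^sub>R w) - f (x + t *\<^sub>R u) - f (x + t *\<^sub>R w) + f x)) (A w) < e"
    unfolding eventually_at_right_field using \<open>d > 0\<close> by auto
qed

text \<open>Both orders of differentiation are the limit of the same second difference quotient.\<close>

lemma pd_commute:
  fixes f :: "real \<times> real \<Rightarrow> 'b::real_inner"
  assumes "open S" "x \<in> S" and fd: "\<And>y. y \<in> S \<Longrightarrow> f differentiable at y"
    and dpd: "\<And>k. pd k f differentiable at x"
  shows "pd j (pd i f) x = pd i (pd j f) x"
proof -
  obtain r where r: "r > 0" "ball x r \<subseteq> S" using assms(1,2) open_contains_ball by blast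
  define Q where "Q a b t = (1 / (t * t)) *\<^sub>R (f (x + t *\<^sub>R ev a + t *\<^sub>R ev b) - f (x + t *\<^sub>R ev a) - f (x + t *\<^sub>R ev b) + f x)"
    for a b t
  have lim: "(Q a b \<longlongrightarrow> pd b (pd a f) x) (at_right 0)" for a b
  proof -
    have "((\<lambda>y. frechet_derivative f (at y) (ev a)) has_derivative frechet_derivative (pd a f) (at x)) (at x)"
      using has_derivative_frechet[OF dpd[of a]] unfolding pd_eq_fun .
    from second_difference_tendsto[OF r(1) _ this, of "ev b"] fd r(2)
    show ?thesis unfolding Q_def pd_def[of b] by blast
  qed
  have "Q i j = Q j i" by (simp add: Q_def fun_eq_iff algebra_simps)
  then show ?thesis using tendsto_unique[OF trivial_limit_at_right_real lim[of i j]] lim[of j i] by simp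
qed

lemma cross3_gram_identity:
  fixes u v a b :: "real^3"
  shows "(u \<bullet> u * (v \<bullet> v) - (u \<bullet> v) * (v \<bullet> u)) * (a \<bullet> b)
    = v \<bullet> v * (a \<bullet> u) * (b \<bullet> u) - (v \<bullet> u) * (a \<bullet> u) * (b \<bullet> v) - (u \<bullet> v) * (a \<bullet> v) * (b \<bullet> u)
      + u \<bullet> u * (a \<bullet> v) * (b \<bullet> v) + (a \<bullet> cross3 u v) * (b \<bullet> cross3 u v)"
  unfolding cross3_def inner_vec_def sum_3 vector_3 by (simp add: algebra_simps)

lemma norm_cross3_squared: "(norm (cross3 u v))^2 = u \<bullet> u * (v \<bullet> v) - (u \<bullet> v) * (v \<bullet> u)"
  unfolding power2_norm_eq_inner cross3_def inner_vec_def sum_3 vector_3 by (simp add: algebra_simps)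

lemma gram_expansion_identity:
  fixes D ab vv vu uv uu au bu av bv aN bN :: real
  assumes "uv = vu" "D \<noteq> 0" "D * ab = vv * au * bu - vu * au * bv - uv * av * bu + uu * av * bv + aN * bN"
  shows "ab = vv / D * au * bu + (- uv / D) * au * bv + (- vu / D) * av * bu + uu / D * av * bv + aN * bN / D"
proof -
  have eq: "ab = (vv * au * bu - vu * au * bv - uv * av * bu + uu * av * bv + aN * bN) / D"
    using assms(2,3) by (simp add: eq_divide_eq mult.commute)
  show ?thesis unfolding eq assms(1) using assms(2) by (simp add: field_simps)
qed

lemma inverse_2x2_identities:
  fixes D g00 g01 g11 a0 a1 :: real
  assumes "D = g00 * g11 - g01 * g01" "D \<noteq> 0"
  shows "(g11 / D * a0 + - g01 / D * a1) * g00 + (- g01 / D * a0 + g00 / D * a1) * g01 = a0"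
    and "(g11 / D * a0 + - g01 / D * a1) * g01 + (- g01 / D * a0 + g00 / D * a1) * g11 = a1"
  using assms(2) by (simp_all add: field_simps) (simp_all add: assms(1) algebra_simps)

lemma inverse_2x2_derivative_identities:
  fixes g00 g01 g11 d00 d01 d11 :: real
  assumes nz: "g00 * g11 - g01 * g01 \<noteq> 0"
  defines "D \<equiv> g00 * g11 - g01 * g01" and "dD \<equiv> d00 * g11 + g00 * d11 - (d01 * g01 + g01 * d01)"
  shows "(d11 * D - g11 * dD) / D^2 = - (g11/D * d00 * (g11/D) + g11/D * d01 * (- g01/D) + (- g01/D) * d01 * (g11/D) + (- g01/D) * d11 * (- g01/D))"
    and "((- d01) * D - (- g01) * dD) / D^2 = - (g11/D * d00 * (- g01/D) + g11/D * d01 * (g00/D) + (- g01/D) * d01 * (- g01/D) + (- g01/D) * d11 * (g00/D))"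
    and "((- d01) * D - (- g01) * dD) / D^2 = - ((- g01/D) * d00 * (g11/D) + (- g01/D) * d01 * (- g01/D) + g00/D * d01 * (g11/D) + g00/D * d11 * (- g01/D))"
    and "(d00 * D - g00 * dD) / D^2 = - ((- g01/D) * d00 * (- g01/D) + (- g01/D) * d01 * (g00/D) + g00/D * d01 * (- g01/D) + g00/D * d11 * (g00/D))"
proof -
  have Dnz: "D \<noteq> 0" using nz D_def by simp
  show "(d11 * D - g11 * dD) / D^2 = - (g11/D * d00 * (g11/D) + g11/D * d01 * (- g01/D) + (- g01/D) * d01 * (g11/D) + (- g01/D) * d11 * (- g01/D))"
    using Dnz by (simp add: field_simps power2_eq_square) (simp add: D_def dD_def algebra_simps)
  show "((- d01) * D - (- g01) * dD) / D^2 = - (g11/D * d00 * (- g01/D) + g11/D * d01 * (g00/D) + (- g01/D) * d01 * (- g01/D) + (- g01/D) * d11 * (g00/D))"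
    using Dnz by (simp add: field_simps power2_eq_square) (simp add: D_def dD_def algebra_simps)
  show "((- d01) * D - (- g01) * dD) / D^2 = - ((- g01/D) * d00 * (g11/D) + (- g01/D) * d01 * (- g01/D) + g00/D * d01 * (g11/D) + g00/D * d11 * (- g01/D))"
    using Dnz by (simp add: field_simps power2_eq_square) (simp add: D_def dD_def algebra_simps)
  show "(d00 * D - g00 * dD) / D^2 = - ((- g01/D) * d00 * (- g01/D) + (- g01/D) * d01 * (g00/D) + g00/D * d01 * (- g01/D) + g00/D * d11 * (g00/D))"
    using Dnz by (simp add: field_simps power2_eq_square) (simp add: D_def dD_def algebra_simps)
qed

text \<open>The coordinate form of the theorem. In the application gi is the inverse metric, h the second
  fundamental form, Gm a b c = X_ab \<cdot> X_c, P i j = \<xi>_i \<cdot> X_j, Q m i j = \<xi>_mi \<cdot> X_j, s p = \<xi> \<cdot> X_p,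
  psi = \<xi> \<cdot> \<nu>, xiX2 p i = \<xi> \<cdot> X_pi, xiiX2 i j m = \<xi>_i \<cdot> X_jm, xinu i j = \<xi>_i \<cdot> \<nu>_j, t the
  tangential coordinates of \<xi>, and dgi, dt the partial derivatives of gi and t.
  Hypothesis div_const says that the derivative of div \<xi> vanishes.\<close>

lemma jacobi_coordinate_identity:
  fixes gi h P xiX2 xinu dt :: "nat \<Rightarrow> nat \<Rightarrow> real" and dgi Gm Q xiiX2 :: "nat \<Rightarrow> nat \<Rightarrow> nat \<Rightarrow> real"
    and t s :: "nat \<Rightarrow> real" and psi :: real
  assumes gs: "gi 1 0 = gi 0 1"
    and Gs: "\<And>c. Gm 1 0 c = Gm 0 1 c"
    and hs: "h 1 0 = h 0 1"
    and dgi: "\<And>m a b. dgi m a b = - (\<Sum>c<2. \<Sum>d<2. gi a c * (Gm c m d + Gm d m c) * gi d b)"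
    and xiX2: "\<And>p i. xiX2 p i = (\<Sum>k<2. \<Sum>l<2. gi k l * s k * Gm p i l) + psi * h p i"
    and xiiX2: "\<And>i j m. xiiX2 i j m = (\<Sum>k<2. \<Sum>l<2. gi k l * P i k * Gm j m l)"
    and xinu: "\<And>i j. xinu i j = - (\<Sum>k<2. \<Sum>l<2. gi k l * P i k * h l j)"
    and t: "\<And>m. t m = (\<Sum>p<2. gi m p * s p)"
    and dt: "\<And>m i. dt m i = (\<Sum>p<2. dgi i m p * s p + gi m p * (P i p + xiX2 p i))"
    and div_const: "\<And>m. (\<Sum>i<2. \<Sum>j<2. dgi m i j * P i j + gi i j * (Q i m j + xiiX2 i j m)) = 0"
    and Qs: "\<And>m i j. Q m i j = Q i m j"
  shows "(\<Sum>i<2. \<Sum>j<2. gi i j * (\<Sum>m<2. dt m i * P m j + t m * Q m i j))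
           + (\<Sum>i<2. \<Sum>j<2. gi i j * xinu i j) * psi
         = (\<Sum>i<2. \<Sum>j<2. gi i j * P i j)^2
           - 2 * ((\<Sum>j<2. gi 0 j * P 0 j) * (\<Sum>j<2. gi 1 j * P 1 j)
                  - (\<Sum>j<2. gi 0 j * P 1 j) * (\<Sum>j<2. gi 1 j * P 0 j))"
proof -
  define H where "H m = (\<Sum>i<2. \<Sum>j<2. dgi m i j * P i j + gi i j * (Q i m j + xiiX2 i j m))" for m
  define A1 where "A1 = (\<Sum>i<2. \<Sum>j<2. \<Sum>m<2. \<Sum>p<2. gi i j * dgi i m p * s p * P m j)"
  define A2 where "A2 = (\<Sum>i<2. \<Sum>j<2. \<Sum>m<2. \<Sum>p<2. gi i j * gi m p * P i p * P m j)"
  define A3 where "A3 = (\<Sum>i<2. \<Sum>j<2. \<Sum>m<2. \<Sum>p<2. \<Sum>k<2. \<Sum>l<2. gi i j * gi m p * gi k l * s k * Gm p i l * P m j)"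
  define A4 where "A4 = (\<Sum>i<2. \<Sum>j<2. \<Sum>m<2. \<Sum>p<2. gi i j * gi m p * psi * h p i * P m j)"
  define T2 where "T2 = (\<Sum>i<2. \<Sum>j<2. \<Sum>m<2. gi i j * t m * Q m i j)"
  define T3 where "T3 = (\<Sum>i<2. \<Sum>j<2. gi i j * xinu i j) * psi"
  define C where "C m = (\<Sum>i<2. \<Sum>j<2. dgi m i j * P i j + gi i j * xiiX2 i j m)" for m
  have split: "(\<Sum>i<2. \<Sum>j<2. gi i j * (\<Sum>m<2. dt m i * P m j + t m * Q m i j))
           + (\<Sum>i<2. \<Sum>j<2. gi i j * xinu i j) * psi = A1 + A2 + A3 + A4 + T2 + T3"
    unfolding A1_def A2_def A3_def A4_def T2_def T3_def dt xiX2 sum_lessThan_2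
    by (simp add: algebra_simps)
  have e1: "A1 + A3 = t 0 * C 0 + t 1 * C 1"
    unfolding A1_def A3_def C_def t dgi xiiX2 sum_lessThan_2 gs Gs by (simp add: algebra_simps)
  have e2: "A4 + T3 = 0"
    unfolding A4_def T3_def xinu sum_lessThan_2 gs hs by (simp add: algebra_simps)
  have e3: "T2 = t 0 * (H 0 - C 0) + t 1 * (H 1 - C 1)"
    unfolding T2_def H_def C_def sum_lessThan_2
    using Qs[of 0 1] Qs[of 1 0] by (simp add: algebra_simps)
  have e4: "A2 = (\<Sum>i<2. \<Sum>j<2. gi i j * P i j)^2
           - 2 * ((\<Sum>j<2. gi 0 j * P 0 j) * (\<Sum>j<2. gi 1 j * P 1 j)
                  - (\<Sum>j<2. gi 0 j * P 1 j) * (\<Sum>j<2. gi 1 j * P 0 j))"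
    unfolding A2_def sum_lessThan_2 gs by (simp add: algebra_simps power2_eq_square)
  have "H 0 = 0" "H 1 = 0" using div_const unfolding H_def by auto
  then show ?thesis using split e1 e2 e3 e4 by (simp add: algebra_simps)
qed

section \<open>The homogeneous extension of \<gamma>\<close>

lemma grad3_basis: "b \<in> Basis \<Longrightarrow> grad3 f z \<bullet> b = frechet_derivative f (at z) b"
  by (auto simp: Basis_vec_def grad3_def inner_axis)

lemma linear_basis_expansion:
  fixes L :: "'a::euclidean_space \<Rightarrow> 'b::real_vector"
  shows "linear L \<Longrightarrow> L w = (\<Sum>b\<in>Basis. (w \<bullet> b) *\<^sub>R L b)"
proof -
  assume l: "linear L"
  have "L w = L (\<Sum>b\<in>Basis. (w \<bullet> b) *\<^sub>R b)" by (simp add: euclidean_representation)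
  also have "\<dots> = (\<Sum>b\<in>Basis. (w \<bullet> b) *\<^sub>R L b)" by (simp add: linear_sum[OF l] linear_scale[OF l])
  finally show ?thesis .
qed

lemma gext_positive_homogeneous: "t > 0 \<Longrightarrow> gext \<gamma> (t *\<^sub>R z) = t * gext \<gamma> z"
proof -
  assume t: "t > 0"
  have n: "norm (t *\<^sub>R z) = t * norm z" using t by simp
  have k: "(1 / (t * norm z)) * t = 1 / norm z" using t by simp
  have v: "(1 / norm (t *\<^sub>R z)) *\<^sub>R (t *\<^sub>R z) = (1 / norm z) *\<^sub>R z"
    unfolding n scaleR_scaleR k ..
  show ?thesis unfolding gext_def v n by simp
qed

lemma gext_on_sphere: "norm z = 1 \<Longrightarrow> gext \<gamma> z = \<gamma> z"
  by (simp add: gext_def)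

lemma open_punctured: "open (- {0::real^3})"
  by auto

locale aniso_integrand =
  fixes \<gamma> :: "real^3 \<Rightarrow> real"
  assumes gext_C3: "Ck 3 (gext \<gamma>) (- {0})"
begin

lemma gext_differentiable: "z \<noteq> 0 \<Longrightarrow> gext \<gamma> differentiable at z"
  using Ck3_differentiable(1)[OF gext_C3 open_punctured] by simp
lemma dir_deriv_gext_differentiable: "z \<noteq> 0 \<Longrightarrow> (\<lambda>z. frechet_derivative (gext \<gamma>) (at z) v) differentiable at z"
  using Ck3_differentiable(2)[OF gext_C3 open_punctured] by simp
lemma dir_deriv2_gext_differentiable: "z \<noteq> 0 \<Longrightarrow> (\<lambda>z. frechet_derivative (\<lambda>z. frechet_derivative (gext \<gamma>) (at z) v) (at z) w) differentiable at z"
  using Ck3_differentiable(3)[OF gext_C3 open_punctured] by simp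

lemma grad_gext_inner_basis: "b \<in> Basis \<Longrightarrow> (\<lambda>z. grad3 (gext \<gamma>) z \<bullet> b) = (\<lambda>z. frechet_derivative (gext \<gamma>) (at z) b)"
  using grad3_basis by auto

lemma grad_gext_differentiable: "z \<noteq> 0 \<Longrightarrow> grad3 (gext \<gamma>) differentiable at z"
proof (rule iffD2[OF differentiable_componentwise_within], intro ballI)
  fix b :: "real^3" assume z: "z \<noteq> 0" and b: "b \<in> Basis"
  show "(\<lambda>x. grad3 (gext \<gamma>) x \<bullet> b) differentiable at z" unfolding grad_gext_inner_basis[OF b] by (rule dir_deriv_gext_differentiable[OF z])
qed

lemma frechet_derivative_gext: "z \<noteq> 0 \<Longrightarrow> frechet_derivative (gext \<gamma>) (at z) w = grad3 (gext \<gamma>) z \<bullet> w"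
proof -
  assume z: "z \<noteq> 0"
  have "frechet_derivative (gext \<gamma>) (at z) w = (\<Sum>b\<in>Basis. (w \<bullet> b) *\<^sub>R frechet_derivative (gext \<gamma>) (at z) b)"
    by (rule linear_basis_expansion[OF linear_frechet_derivative[OF gext_differentiable[OF z]]])
  also have "\<dots> = (\<Sum>b\<in>Basis. (w \<bullet> b) * (grad3 (gext \<gamma>) z \<bullet> b))"
    by (intro sum.cong refl) (simp add: grad3_basis)
  also have "\<dots> = grad3 (gext \<gamma>) z \<bullet> w"
    by (subst euclidean_inner[of "grad3 (gext \<gamma>) z" w]) (simp add: mult.commute)
  finally show ?thesis .
qed

lemma frechet_derivative_grad_gext_inner: "z \<noteq> 0 \<Longrightarrow> frechet_derivative (grad3 (gext \<gamma>)) (at z) e \<bullet> b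
     = frechet_derivative (\<lambda>z. grad3 (gext \<gamma>) z \<bullet> b) (at z) e"
  using frechet_derivative_at[OF has_derivative_inner_left[OF has_derivative_frechet[OF grad_gext_differentiable], of z b]] by metis

lemma dir_deriv_grad_gext_differentiable: "z \<noteq> 0 \<Longrightarrow> (\<lambda>z. frechet_derivative (grad3 (gext \<gamma>)) (at z) e) differentiable at z"
proof -
  assume z: "z \<noteq> 0"
  show ?thesis
  proof (rule iffD2[OF differentiable_componentwise_within], intro ballI)
    fix b :: "real^3" assume b: "b \<in> Basis"
    show "(\<lambda>x. frechet_derivative (grad3 (gext \<gamma>)) (at x) e \<bullet> b) differentiable at z within UNIV"
      using differentiable_cong_open[OF open_punctured _ _ dir_deriv2_gext_differentiable[OF z, of b e], of "\<lambda>x. frechet_derivative (grad3 (gext \<gamma>)) (at x) e \<bullet> b"] z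
      by (simp add: frechet_derivative_grad_gext_inner grad_gext_inner_basis[OF b])
  qed
qed

lemma euler_gext: "z \<noteq> 0 \<Longrightarrow> grad3 (gext \<gamma>) z \<bullet> z = gext \<gamma> z"
proof -
  assume z: "z \<noteq> 0"
  have i: "((\<lambda>t::real. t *\<^sub>R z) has_derivative (\<lambda>h. h *\<^sub>R z)) (at 1)"
    by (auto intro!: derivative_eq_intros)
  have c: "((\<lambda>t. gext \<gamma> (t *\<^sub>R z)) has_derivative (\<lambda>h. frechet_derivative (gext \<gamma>) (at z) (h *\<^sub>R z))) (at 1)"
    using diff_chain_at[OF i, of "gext \<gamma>"] has_derivative_frechet[OF gext_differentiable[OF z]] by (simp add: o_def)
  have c2: "((\<lambda>t. gext \<gamma> (t *\<^sub>R z)) has_derivative (\<lambda>h. h * gext \<gamma> z)) (at 1)"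
  proof (rule has_derivative_transform_within_open[of "\<lambda>t. t * gext \<gamma> z" _ _ _ "{0<..}"])
    show "((\<lambda>t. t * gext \<gamma> z) has_derivative (\<lambda>h. h * gext \<gamma> z)) (at 1)"
      by (auto intro!: derivative_eq_intros)
  qed (auto simp: gext_positive_homogeneous)
  have "(\<lambda>h. frechet_derivative (gext \<gamma>) (at z) (h *\<^sub>R z)) = (\<lambda>h. h * gext \<gamma> z)"
    using has_derivative_unique[OF c c2] .
  from fun_cong[OF this, of 1] show ?thesis using frechet_derivative_gext[OF z] by simp
qed

lemma Amap_eq: "Amap \<gamma> n = frechet_derivative (grad3 (gext \<gamma>)) (at n)"
  by (simp add: fun_eq_iff Amap_def)

lemma linear_Amap: "n \<noteq> 0 \<Longrightarrow> linear (Amap \<gamma> n)"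
  unfolding Amap_eq by (rule linear_frechet_derivative[OF grad_gext_differentiable])

end

section \<open>Regular parametrized faces\<close>

locale regular_patch =
  fixes X :: "real \<times> real \<Rightarrow> real^3" and U :: "(real \<times> real) set"
  assumes open_U: "open U" and X_C3: "Ck 3 X U"
    and regular: "\<forall>x\<in>U. cross3 (pd 0 X x) (pd 1 X x) \<noteq> 0"
begin

definition cross_tangent :: "real \<times> real \<Rightarrow> real^3" where
  "cross_tangent y = cross3 (pd 0 X y) (pd 1 X y)"
definition inv_norm_cross :: "real \<times> real \<Rightarrow> real" where
  "inv_norm_cross y = inverse (norm (cross_tangent y))"

lemma X_differentiable: "y \<in> U \<Longrightarrow> X differentiable at y" using Ck3_differentiable(1)[OF X_C3 open_U] .
lemma pd_X_differentiable: "y \<in> U \<Longrightarrow> pd i X differentiable at y" unfolding pd_eq_fun using Ck3_differentiable(2)[OF X_C3 open_U] .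
lemma pd_pd_X_differentiable: "y \<in> U \<Longrightarrow> pd j (pd i X) differentiable at y" unfolding pd_eq_fun using Ck3_differentiable(3)[OF X_C3 open_U] .

lemma pd_pd_X_commute: "y \<in> U \<Longrightarrow> pd j (pd i X) y = pd i (pd j X) y"
  by (rule pd_commute[OF open_U _ X_differentiable pd_X_differentiable])

lemma cross_tangent_nonzero: "y \<in> U \<Longrightarrow> cross_tangent y \<noteq> 0" using regular by (simp add: cross_tangent_def)

lemma cross_tangent_differentiable: "y \<in> U \<Longrightarrow> cross_tangent differentiable at y"
  unfolding cross_tangent_def[abs_def] by (rule differentiable_bilinear[OF bounded_bilinear_cross3 pd_X_differentiable pd_X_differentiable])

lemma pd_cross_tangent: "y \<in> U \<Longrightarrow> pd i cross_tangent y = cross3 (pd i (pd 0 X) y) (pd 1 X y) + cross3 (pd 0 X y) (pd i (pd 1 X) y)"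
  unfolding cross_tangent_def[abs_def] by (rule pd_bilinear[OF bounded_bilinear_cross3 pd_X_differentiable pd_X_differentiable])

lemma pd_cross_tangent_differentiable: "y \<in> U \<Longrightarrow> pd i cross_tangent differentiable at y"
  by (rule differentiable_cong_open[OF open_U _ pd_cross_tangent[symmetric]])
    (auto intro!: differentiable_add differentiable_bilinear[OF bounded_bilinear_cross3] pd_X_differentiable pd_pd_X_differentiable)

lemma nrm_eq_scaled_cross: "nrm X = (\<lambda>y. inv_norm_cross y *\<^sub>R cross_tangent y)"
  by (simp add: fun_eq_iff nrm_def inv_norm_cross_def cross_tangent_def divide_inverse)

lemma norm_cross_tangent_differentiable: "y \<in> U \<Longrightarrow> (\<lambda>y. norm (cross_tangent y)) differentiable at y"
  by (rule differentiable_compose[OF differentiable_norm_at[OF cross_tangent_nonzero] cross_tangent_differentiable])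

lemma inv_norm_cross_differentiable: "y \<in> U \<Longrightarrow> inv_norm_cross differentiable at y"
  unfolding inv_norm_cross_def[abs_def] using differentiable_inverse[OF norm_cross_tangent_differentiable] cross_tangent_nonzero by simp

lemma pd_inv_norm_cross: "y \<in> U \<Longrightarrow> pd i inv_norm_cross y = - (inv_norm_cross y * (pd i cross_tangent y \<bullet> (inv_norm_cross y *\<^sub>R cross_tangent y)) * inv_norm_cross y)"
proof -
  assume y: "y \<in> U"
  have "pd i inv_norm_cross y = frechet_derivative inverse (at (norm (cross_tangent y))) (pd i (\<lambda>y. norm (cross_tangent y)) y)"
    unfolding inv_norm_cross_def[abs_def] by (rule pd_chain[OF norm_cross_tangent_differentiable[OF y]]) (use cross_tangent_nonzero[OF y] in \<open>auto intro: differentiable_inverse\<close>)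
  also have "pd i (\<lambda>y. norm (cross_tangent y)) y = pd i cross_tangent y \<bullet> sgn (cross_tangent y)"
    by (subst pd_chain[OF cross_tangent_differentiable[OF y] differentiable_norm_at[OF cross_tangent_nonzero[OF y]]]) (simp add: frechet_derivative_norm cross_tangent_nonzero[OF y])
  finally show ?thesis using cross_tangent_nonzero[OF y]
    by (simp add: frechet_derivative_inverse sgn_div_norm inv_norm_cross_def[abs_def])
qed

lemma pd_inv_norm_cross_differentiable: "y \<in> U \<Longrightarrow> pd i inv_norm_cross differentiable at y"
  by (rule differentiable_cong_open[OF open_U _ pd_inv_norm_cross[symmetric]])
    (auto intro!: differentiable_minus differentiable_bilinear[OF bounded_bilinear_mult] differentiable_bilinear[OF bounded_bilinear_inner]
      differentiable_bilinear[OF bounded_bilinear_scaleR] inv_norm_cross_differentiable cross_tangent_differentiable pd_cross_tangent_differentiable)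

lemma nrm_differentiable: "y \<in> U \<Longrightarrow> nrm X differentiable at y"
  unfolding nrm_eq_scaled_cross by (rule differentiable_bilinear[OF bounded_bilinear_scaleR inv_norm_cross_differentiable cross_tangent_differentiable])

lemma pd_nrm_eq: "y \<in> U \<Longrightarrow> pd i (nrm X) y = pd i inv_norm_cross y *\<^sub>R cross_tangent y + inv_norm_cross y *\<^sub>R pd i cross_tangent y"
  unfolding nrm_eq_scaled_cross by (rule pd_bilinear[OF bounded_bilinear_scaleR inv_norm_cross_differentiable cross_tangent_differentiable])

lemma pd_nrm_differentiable: "y \<in> U \<Longrightarrow> pd i (nrm X) differentiable at y"
  by (rule differentiable_cong_open[OF open_U _ pd_nrm_eq[symmetric]])
    (auto intro!: differentiable_add differentiable_bilinear[OF bounded_bilinear_scaleR] inv_norm_cross_differentiable cross_tangent_differentiable pd_cross_tangent_differentiable pd_inv_norm_cross_differentiable)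

lemma nrm_inner_self: "y \<in> U \<Longrightarrow> nrm X y \<bullet> nrm X y = 1"
proof -
  assume y: "y \<in> U"
  have n: "norm (cross_tangent y) \<noteq> 0" using cross_tangent_nonzero[OF y] by simp
  have "cross_tangent y \<bullet> cross_tangent y = (norm (cross_tangent y))^2" by (simp add: dot_square_norm)
  then show ?thesis using n by (simp add: nrm_eq_scaled_cross inv_norm_cross_def power2_eq_square field_simps)
qed

lemma nrm_orthogonal_pd_X: "nrm X y \<bullet> pd i X y = 0"
proof (cases "i = 0")
  case False then show ?thesis by (simp only: pd_index_ne_0[OF False]) (simp add: nrm_eq_scaled_cross cross_tangent_def dot_cross_self)
qed (simp add: nrm_eq_scaled_cross cross_tangent_def dot_cross_self)

lemma pd_nrm_orthogonal_nrm: "y \<in> U \<Longrightarrow> pd i (nrm X) y \<bullet> nrm X y = 0"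
proof -
  assume y: "y \<in> U"
  have "pd i (\<lambda>y. nrm X y \<bullet> nrm X y) y = 0" by (rule pd_eq_0_if_constant_on[OF open_U y nrm_inner_self])
  then show ?thesis
    by (simp add: pd_bilinear[OF bounded_bilinear_inner nrm_differentiable[OF y] nrm_differentiable[OF y]] inner_commute)
qed

lemma weingarten: "y \<in> U \<Longrightarrow> pd i (nrm X) y \<bullet> pd j X y = - (nrm X y \<bullet> pd i (pd j X) y)"
proof -
  assume y: "y \<in> U"
  have "pd i (\<lambda>y. nrm X y \<bullet> pd j X y) y = 0" by (rule pd_eq_0_if_constant_on[OF open_U y]) (rule nrm_orthogonal_pd_X)
  then show ?thesis
    by (simp add: pd_bilinear[OF bounded_bilinear_inner nrm_differentiable[OF y] pd_X_differentiable[OF y]] eq_neg_iff_add_eq_0)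
qed

lemma gdet_eq_norm_cross: "gdet X y = (norm (cross_tangent y))^2"
  by (simp add: gdet_def gmet_def cross_tangent_def norm_cross3_squared)

lemma gdet_nonzero: "y \<in> U \<Longrightarrow> gdet X y \<noteq> 0"
  using cross_tangent_nonzero by (simp add: gdet_eq_norm_cross)

lemma inner_frame_expansion: "y \<in> U \<Longrightarrow> a \<bullet> b = (\<Sum>k<2. \<Sum>l<2. ginv X k l y * (a \<bullet> pd k X y) * (b \<bullet> pd l X y))
       + (a \<bullet> nrm X y) * (b \<bullet> nrm X y)"
proof -
  assume y: "y \<in> U"
  define u where "u = pd 0 X y"
  define v where "v = pd 1 X y"
  define D where "D = gdet X y"
  have D: "D \<noteq> 0" using gdet_nonzero[OF y] by (simp add: D_def)
  have Dn: "(norm (cross_tangent y))^2 = D" by (simp add: D_def gdet_eq_norm_cross)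
  have g: "D * (a \<bullet> b) = v \<bullet> v * (a \<bullet> u) * (b \<bullet> u) - (v \<bullet> u) * (a \<bullet> u) * (b \<bullet> v) - (u \<bullet> v) * (a \<bullet> v) * (b \<bullet> u)
      + u \<bullet> u * (a \<bullet> v) * (b \<bullet> v) + (a \<bullet> cross_tangent y) * (b \<bullet> cross_tangent y)"
    unfolding D_def gdet_def gmet_def u_def v_def cross_tangent_def using cross3_gram_identity by simp
  have nn: "(a \<bullet> nrm X y) * (b \<bullet> nrm X y) = (a \<bullet> cross_tangent y) * (b \<bullet> cross_tangent y) / D"
  proof -
    have "(a \<bullet> nrm X y) * (b \<bullet> nrm X y) = (inv_norm_cross y * inv_norm_cross y) * ((a \<bullet> cross_tangent y) * (b \<bullet> cross_tangent y))"
      by (simp add: nrm_eq_scaled_cross algebra_simps)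
    also have "inv_norm_cross y * inv_norm_cross y = 1 / D" using Dn by (simp add: inv_norm_cross_def power2_eq_square field_simps)
    finally show ?thesis by simp
  qed
  have gi: "ginv X 0 0 y = v \<bullet> v / D" "ginv X 0 1 y = - (u \<bullet> v) / D"
    "ginv X 1 0 y = - (v \<bullet> u) / D" "ginv X 1 1 y = u \<bullet> u / D"
    by (simp_all add: ginv_def gmet_def D_def u_def v_def)
  show ?thesis
    unfolding sum_lessThan_2 nn gi u_def[symmetric] v_def[symmetric]
    using gram_expansion_identity[OF inner_commute D g] by (simp add: algebra_simps)
qed

lemma eq_if_frame_inner_eq:
  assumes y: "y \<in> U" and "a \<bullet> pd 0 X y = b \<bullet> pd 0 X y" "a \<bullet> pd 1 X y = b \<bullet> pd 1 X y" "a \<bullet> nrm X y = b \<bullet> nrm X y"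
  shows "a = b"
proof -
  have "(a - b) \<bullet> (a - b) = 0"
    using assms(2-4) by (subst inner_frame_expansion[OF y]) (simp add: sum_lessThan_2 inner_diff_left)
  then show ?thesis by simp
qed

lemma norm_nrm: "y \<in> U \<Longrightarrow> norm (nrm X y) = 1"
  using nrm_inner_self[of y] by (simp add: norm_eq_sqrt_inner)

lemma nrm_nonzero: "y \<in> U \<Longrightarrow> nrm X y \<noteq> 0"
  using norm_nrm[of y] by auto

lemma gmet_eq: "gmet X a b = (\<lambda>y. pd a X y \<bullet> pd b X y)" by (simp add: fun_eq_iff gmet_def)

lemma gmet_sym: "gmet X b a = gmet X a b" by (simp add: gmet_eq inner_commute)

lemma gmet_differentiable: "y \<in> U \<Longrightarrow> gmet X a b differentiable at y"
  unfolding gmet_eq by (rule differentiable_bilinear[OF bounded_bilinear_inner pd_X_differentiable pd_X_differentiable])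

lemma pd_gmet: "y \<in> U \<Longrightarrow> pd m (gmet X a b) y = pd m (pd a X) y \<bullet> pd b X y + pd a X y \<bullet> pd m (pd b X) y"
  unfolding gmet_eq by (rule pd_bilinear[OF bounded_bilinear_inner pd_X_differentiable pd_X_differentiable])

lemma gdet_eq: "gdet X = (\<lambda>y. gmet X 0 0 y * gmet X 1 1 y - gmet X 0 1 y * gmet X 1 0 y)"
  by (simp add: fun_eq_iff gdet_def)

lemma gdet_differentiable: "y \<in> U \<Longrightarrow> gdet X differentiable at y"
  unfolding gdet_eq
  by (rule differentiable_diff; rule differentiable_bilinear[OF bounded_bilinear_mult gmet_differentiable gmet_differentiable])

lemma pd_gdet: "y \<in> U \<Longrightarrow> pd m (gdet X) y = pd m (gmet X 0 0) y * gmet X 1 1 y + gmet X 0 0 y * pd m (gmet X 1 1) y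
   - (pd m (gmet X 0 1) y * gmet X 1 0 y + gmet X 0 1 y * pd m (gmet X 1 0) y)"
proof -
  assume y: "y \<in> U"
  have d: "(\<lambda>y. gmet X a b y * gmet X c d y) differentiable at y" for a b c d
    by (rule differentiable_bilinear[OF bounded_bilinear_mult gmet_differentiable[OF y] gmet_differentiable[OF y]])
  show ?thesis
    unfolding gdet_eq pd_diff[OF d d]
    by (simp add: pd_bilinear[OF bounded_bilinear_mult gmet_differentiable[OF y] gmet_differentiable[OF y]])
qed

lemma ginv_00: "ginv X 0 0 = (\<lambda>y. gmet X 1 1 y / gdet X y)" by (simp add: fun_eq_iff ginv_def)
lemma ginv_01: "ginv X 0 1 = (\<lambda>y. - gmet X 0 1 y / gdet X y)" by (simp add: fun_eq_iff ginv_def)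
lemma ginv_10: "ginv X 1 0 = (\<lambda>y. - gmet X 0 1 y / gdet X y)" by (simp add: fun_eq_iff ginv_def gmet_sym)
lemma ginv_11: "ginv X 1 1 = (\<lambda>y. gmet X 0 0 y / gdet X y)" by (simp add: fun_eq_iff ginv_def)

lemma ginv_differentiable: "y \<in> U \<Longrightarrow> ginv X a b differentiable at y"
  unfolding ginv_def by (cases "a = 0 \<and> b = 0"; cases "a = 1 \<and> b = 1")
    (auto intro!: differentiable_divide differentiable_minus gmet_differentiable gdet_differentiable gdet_nonzero)

lemma pd_ginv: "y \<in> U \<Longrightarrow> a < 2 \<Longrightarrow> b < 2 \<Longrightarrow>
   pd m (ginv X a b) y = - (\<Sum>c<2. \<Sum>d<2. ginv X a c y * pd m (gmet X c d) y * ginv X d b y)"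
proof -
  assume y: "y \<in> U" and ab: "a < 2" "b < 2"
  define G00 where "G00 = gmet X 0 0 y"
  define G01 where "G01 = gmet X 0 1 y"
  define G11 where "G11 = gmet X 1 1 y"
  define P00 where "P00 = pd m (gmet X 0 0) y"
  define P01 where "P01 = pd m (gmet X 0 1) y"
  define P11 where "P11 = pd m (gmet X 1 1) y"
  have g10: "gmet X 1 0 y = G01" unfolding G01_def gmet_sym[of 1 0] ..
  have p10: "pd m (gmet X 1 0) y = P01" unfolding P01_def gmet_sym[of 1 0] ..
  have gd: "gdet X y = G00 * G11 - G01 * G01" unfolding gdet_def G00_def[symmetric] G11_def[symmetric] G01_def[symmetric] g10 ..
  have nz: "G00 * G11 - G01 * G01 \<noteq> 0" using gdet_nonzero[OF y] gd by simp
  have pgd: "pd m (gdet X) y = P00 * G11 + G00 * P11 - (P01 * G01 + G01 * P01)"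
    unfolding pd_gdet[OF y] G00_def[symmetric] G11_def[symmetric] G01_def[symmetric] P00_def[symmetric] P01_def[symmetric] P11_def[symmetric] g10 p10 ..
  have gi: "ginv X 0 0 y = G11 / (G00 * G11 - G01 * G01)" "ginv X 0 1 y = - G01 / (G00 * G11 - G01 * G01)"
    "ginv X 1 0 y = - G01 / (G00 * G11 - G01 * G01)" "ginv X 1 1 y = G00 / (G00 * G11 - G01 * G01)"
    unfolding ginv_00 ginv_01 ginv_10 ginv_11 gd G00_def[symmetric] G11_def[symmetric] G01_def[symmetric] by simp_all
  have mg: "\<And>num. num differentiable at y \<Longrightarrow> pd m (\<lambda>y. num y / gdet X y) y
      = (pd m num y * (G00 * G11 - G01 * G01) - num y * (P00 * G11 + G00 * P11 - (P01 * G01 + G01 * P01)))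
        / (G00 * G11 - G01 * G01)^2"
    by (simp add: pd_div[OF _ gdet_differentiable[OF y] gdet_nonzero[OF y]] gd pgd)
  have m1: "pd m (\<lambda>y. - gmet X 0 1 y / gdet X y) y = ((- P01) * (G00 * G11 - G01 * G01) - (- G01) * (P00 * G11 + G00 * P11 - (P01 * G01 + G01 * P01)))
        / (G00 * G11 - G01 * G01)^2"
    using mg[OF differentiable_minus[OF gmet_differentiable[OF y]]] by (simp add: pd_minus[OF gmet_differentiable[OF y]] P01_def G01_def)
  have m0: "pd m (\<lambda>y. gmet X 1 1 y / gdet X y) y = (P11 * (G00 * G11 - G01 * G01) - G11 * (P00 * G11 + G00 * P11 - (P01 * G01 + G01 * P01)))
        / (G00 * G11 - G01 * G01)^2"
    using mg[OF gmet_differentiable[OF y]] by (simp add: P11_def G11_def)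
  have m3: "pd m (\<lambda>y. gmet X 0 0 y / gdet X y) y = (P00 * (G00 * G11 - G01 * G01) - G00 * (P00 * G11 + G00 * P11 - (P01 * G01 + G01 * P01)))
        / (G00 * G11 - G01 * G01)^2"
    using mg[OF gmet_differentiable[OF y]] by (simp add: P00_def G00_def)
  note A = inverse_2x2_derivative_identities[OF nz, where ?d00.0=P00 and ?d01.0=P01 and ?d11.0=P11]
  from ab have "a = 0 \<or> a = 1" "b = 0 \<or> b = 1" by auto
  then show ?thesis
  proof (elim disjE)
    assume ab': "a = 0" "b = 0" then show ?thesis
      unfolding ab' sum_lessThan_2 gi p10 unfolding ginv_00 m0 P00_def[symmetric] P01_def[symmetric] P11_def[symmetric] using A(1) by (simp only: add.assoc)
  next
    assume ab': "a = 0" "b = 1" then show ?thesis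
      unfolding ab' sum_lessThan_2 gi p10 unfolding ginv_01 m1 P00_def[symmetric] P01_def[symmetric] P11_def[symmetric] using A(2) by (simp only: add.assoc)
  next
    assume ab': "a = 1" "b = 0" then show ?thesis
      unfolding ab' sum_lessThan_2 gi p10 unfolding ginv_10 m1 P00_def[symmetric] P01_def[symmetric] P11_def[symmetric] using A(3) by (simp only: add.assoc)
  next
    assume ab': "a = 1" "b = 1" then show ?thesis
      unfolding ab' sum_lessThan_2 gi p10 unfolding ginv_11 m3 P00_def[symmetric] P01_def[symmetric] P11_def[symmetric] using A(4) by (simp only: add.assoc)
  qed
qed

lemma ginv_simps: "ginv X 0 0 y = gmet X 1 1 y / gdet X y" "ginv X 0 1 y = - gmet X 0 1 y / gdet X y"
   "ginv X 1 0 y = - gmet X 0 1 y / gdet X y" "ginv X 1 1 y = gmet X 0 0 y / gdet X y"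
  unfolding ginv_def gmet_sym[of 1 0] by simp_all

lemma gdet_sym_eq: "gdet X y = gmet X 0 0 y * gmet X 1 1 y - gmet X 0 1 y * gmet X 0 1 y"
  unfolding gdet_def gmet_sym[of 1 0] ..

lemma inner_pd_X: "pd a X y \<bullet> pd b X y = gmet X a b y" by (simp add: gmet_def)

lemma tangent_vector_expansion:
  assumes y: "y \<in> U" and an: "a \<bullet> nrm X y = 0"
  shows "a = (\<Sum>k<2. (\<Sum>l<2. ginv X k l y * (a \<bullet> pd l X y)) *\<^sub>R pd k X y)"
proof (rule eq_if_frame_inner_eq[OF y])
  note gv = ginv_simps
  have D: "gdet X y = gmet X 0 0 y * gmet X 1 1 y - gmet X 0 1 y * gmet X 0 1 y" "gdet X y \<noteq> 0"
    using gdet_sym_eq gdet_nonzero[OF y] by auto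
  note I = inverse_2x2_identities[OF D, where ?a0.0 = "a \<bullet> pd 0 X y" and ?a1.0 = "a \<bullet> pd 1 X y"]
  show "a \<bullet> pd 0 X y = (\<Sum>k<2. (\<Sum>l<2. ginv X k l y * (a \<bullet> pd l X y)) *\<^sub>R pd k X y) \<bullet> pd 0 X y"
    unfolding sum_lessThan_2 inner_add_left inner_scaleR_left inner_pd_X gv gmet_sym[of 1 0] using I(1) by simp
  show "a \<bullet> pd 1 X y = (\<Sum>k<2. (\<Sum>l<2. ginv X k l y * (a \<bullet> pd l X y)) *\<^sub>R pd k X y) \<bullet> pd 1 X y"
    unfolding sum_lessThan_2 inner_add_left inner_scaleR_left inner_pd_X gv gmet_sym[of 1 0] using I(2) by simp
  show "a \<bullet> nrm X y = (\<Sum>k<2. (\<Sum>l<2. ginv X k l y * (a \<bullet> pd l X y)) *\<^sub>R pd k X y) \<bullet> nrm X y"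
    unfolding sum_lessThan_2 inner_add_left inner_scaleR_left using an nrm_orthogonal_pd_X by (simp add: inner_commute)
qed

end

section \<open>The Cahn--Hoffman field along a face\<close>

locale aniso_patch = regular_patch X U + aniso_integrand \<gamma>
  for X U \<gamma>
begin

lemma cahn_hoffman_eq: "cahn_hoffman \<gamma> X = (\<lambda>y. grad3 (gext \<gamma>) (nrm X y))"
  by (simp add: fun_eq_iff cahn_hoffman_def)

lemma cahn_hoffman_differentiable: "y \<in> U \<Longrightarrow> cahn_hoffman \<gamma> X differentiable at y"
  unfolding cahn_hoffman_eq by (rule differentiable_compose[OF grad_gext_differentiable[OF nrm_nonzero] nrm_differentiable])

lemma pd_cahn_hoffman: "y \<in> U \<Longrightarrow> pd m (cahn_hoffman \<gamma> X) y = Amap \<gamma> (nrm X y) (pd m (nrm X) y)"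
  unfolding cahn_hoffman_eq Amap_eq by (rule pd_chain[OF nrm_differentiable grad_gext_differentiable[OF nrm_nonzero]])

lemma pd_cahn_hoffman_differentiable: "y \<in> U \<Longrightarrow> pd m (cahn_hoffman \<gamma> X) differentiable at y"
proof -
  assume y: "y \<in> U"
  have eq: "(\<Sum>b\<in>Basis. (pd m (nrm X) y' \<bullet> b) *\<^sub>R frechet_derivative (grad3 (gext \<gamma>)) (at (nrm X y')) b)
      = pd m (cahn_hoffman \<gamma> X) y'" if "y' \<in> U" for y'
  proof -
    have "pd m (cahn_hoffman \<gamma> X) y' = Amap \<gamma> (nrm X y') (pd m (nrm X) y')" by (rule pd_cahn_hoffman[OF that])
    also have "\<dots> = (\<Sum>b\<in>Basis. (pd m (nrm X) y' \<bullet> b) *\<^sub>R Amap \<gamma> (nrm X y') b)"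
      by (rule linear_basis_expansion[OF linear_Amap[OF nrm_nonzero[OF that]]])
    finally show ?thesis unfolding Amap_eq by simp
  qed
  show ?thesis
    by (rule differentiable_cong_open[OF open_U y eq])
      (assumption, intro differentiable_sum[OF finite_Basis] ballI differentiable_bilinear[OF bounded_bilinear_scaleR]
        differentiable_bilinear[OF bounded_bilinear_inner pd_nrm_differentiable[OF y] differentiable_const]
        differentiable_compose[OF dir_deriv_grad_gext_differentiable[OF nrm_nonzero[OF y]] nrm_differentiable[OF y]])
qed

lemma pd_pd_cahn_hoffman_commute:
  "y \<in> U \<Longrightarrow> pd j (pd i (cahn_hoffman \<gamma> X)) y = pd i (pd j (cahn_hoffman \<gamma> X)) y"
  by (rule pd_commute[OF open_U _ cahn_hoffman_differentiable pd_cahn_hoffman_differentiable])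

lemma cahn_hoffman_inner_nrm: "y \<in> U \<Longrightarrow> cahn_hoffman \<gamma> X y \<bullet> nrm X y = \<gamma> (nrm X y)"
  using euler_gext[OF nrm_nonzero] gext_on_sphere[OF norm_nrm] by (simp add: cahn_hoffman_def)

lemma gext_nrm_differentiable: "y \<in> U \<Longrightarrow> (\<lambda>y. gext \<gamma> (nrm X y)) differentiable at y"
  by (rule differentiable_compose[OF gext_differentiable[OF nrm_nonzero] nrm_differentiable])

lemma pd_gamma_nrm: "y \<in> U \<Longrightarrow> pd j (\<lambda>y. \<gamma> (nrm X y)) y = cahn_hoffman \<gamma> X y \<bullet> pd j (nrm X) y"
proof -
  assume y: "y \<in> U"
  have "pd j (\<lambda>y. gext \<gamma> (nrm X y)) y = pd j (\<lambda>y. \<gamma> (nrm X y)) y"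
    by (rule pd_cong_open[OF open_U y _ gext_nrm_differentiable[OF y]]) (simp add: gext_on_sphere norm_nrm)
  moreover have "pd j (\<lambda>y. gext \<gamma> (nrm X y)) y = cahn_hoffman \<gamma> X y \<bullet> pd j (nrm X) y"
    by (simp add: pd_chain[OF nrm_differentiable[OF y] gext_differentiable[OF nrm_nonzero[OF y]]] frechet_derivative_gext[OF nrm_nonzero[OF y]] cahn_hoffman_def)
  ultimately show ?thesis by simp
qed

lemma pd_cahn_hoffman_orthogonal_nrm: "y \<in> U \<Longrightarrow> pd i (cahn_hoffman \<gamma> X) y \<bullet> nrm X y = 0"
proof -
  assume y: "y \<in> U"
  have "pd i (\<lambda>y. cahn_hoffman \<gamma> X y \<bullet> nrm X y) y = pd i (\<lambda>y. \<gamma> (nrm X y)) y"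
    by (rule pd_cong_open[OF open_U y cahn_hoffman_inner_nrm])
      (assumption, rule differentiable_bilinear[OF bounded_bilinear_inner cahn_hoffman_differentiable[OF y] nrm_differentiable[OF y]])
  then show ?thesis
    by (simp add: pd_bilinear[OF bounded_bilinear_inner cahn_hoffman_differentiable[OF y] nrm_differentiable[OF y]] pd_gamma_nrm[OF y])
qed

definition xi_tan :: "nat \<Rightarrow> real \<times> real \<Rightarrow> real" where
  "xi_tan m y = (\<Sum>p<2. ginv X m p y * (cahn_hoffman \<gamma> X y \<bullet> pd p X y))"

lemma pd_gamma_nrm_expansion: "y \<in> U \<Longrightarrow> pd q (\<lambda>y. \<gamma> (nrm X y)) y
   = (\<Sum>k<2. (\<Sum>l<2. ginv X k l y * (- (nrm X y \<bullet> pd q (pd l X) y))) * (cahn_hoffman \<gamma> X y \<bullet> pd k X y))"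
proof -
  assume y: "y \<in> U"
  have "pd q (\<lambda>y. \<gamma> (nrm X y)) y = cahn_hoffman \<gamma> X y \<bullet> pd q (nrm X) y" by (rule pd_gamma_nrm[OF y])
  also have "pd q (nrm X) y = (\<Sum>k<2. (\<Sum>l<2. ginv X k l y * (pd q (nrm X) y \<bullet> pd l X y)) *\<^sub>R pd k X y)"
    by (rule tangent_vector_expansion[OF y pd_nrm_orthogonal_nrm[OF y]])
  finally show ?thesis
    by (simp add: inner_sum_right weingarten[OF y] mult.commute)
qed

lemma sgrad_gamma_nrm: "y \<in> U \<Longrightarrow> sgrad X (\<lambda>y. \<gamma> (nrm X y)) y = (\<Sum>m<2. xi_tan m y *\<^sub>R pd m (nrm X) y)"
proof -
  assume y: "y \<in> U"
  note gv = ginv_simps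
  have D: "gdet X y = gmet X 0 0 y * gmet X 1 1 y - gmet X 0 1 y * gmet X 0 1 y" "gdet X y \<noteq> 0"
    using gdet_sym_eq gdet_nonzero[OF y] by auto
  define p0 where "p0 = pd 0 (\<lambda>y. \<gamma> (nrm X y)) y"
  define p1 where "p1 = pd 1 (\<lambda>y. \<gamma> (nrm X y)) y"
  have s0: "sgrad X (\<lambda>y. \<gamma> (nrm X y)) y \<bullet> pd 0 X y = p0"
    unfolding sgrad_def sum_lessThan_2 inner_add_left inner_scaleR_left inner_pd_X gv gmet_sym[of 1 0]
      p0_def[symmetric] p1_def[symmetric] using D(2) by (simp add: field_simps) (simp add: D(1) algebra_simps)
  have s1: "sgrad X (\<lambda>y. \<gamma> (nrm X y)) y \<bullet> pd 1 X y = p1"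
    unfolding sgrad_def sum_lessThan_2 inner_add_left inner_scaleR_left inner_pd_X gv gmet_sym[of 1 0]
      p0_def[symmetric] p1_def[symmetric] using D(2) by (simp add: field_simps) (simp add: D(1) algebra_simps)
  have g10: "ginv X 1 0 y = ginv X 0 1 y" unfolding gv ..
  have sy: "nrm X y \<bullet> pd 0 (pd 1 X) y = nrm X y \<bullet> pd 1 (pd 0 X) y" unfolding pd_pd_X_commute[OF y, of 0 1] ..
  show ?thesis
  proof (rule eq_if_frame_inner_eq[OF y])
    show "sgrad X (\<lambda>y. \<gamma> (nrm X y)) y \<bullet> pd 0 X y = (\<Sum>m<2. xi_tan m y *\<^sub>R pd m (nrm X) y) \<bullet> pd 0 X y"
      unfolding s0 p0_def pd_gamma_nrm_expansion[OF y] sum_lessThan_2 inner_add_left inner_scaleR_left weingarten[OF y] xi_tan_def g10 sy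
      by (simp add: algebra_simps)
    show "sgrad X (\<lambda>y. \<gamma> (nrm X y)) y \<bullet> pd 1 X y = (\<Sum>m<2. xi_tan m y *\<^sub>R pd m (nrm X) y) \<bullet> pd 1 X y"
      unfolding s1 p1_def pd_gamma_nrm_expansion[OF y] sum_lessThan_2 inner_add_left inner_scaleR_left weingarten[OF y] xi_tan_def g10 sy
      by (simp add: algebra_simps)
    show "sgrad X (\<lambda>y. \<gamma> (nrm X y)) y \<bullet> nrm X y = (\<Sum>m<2. xi_tan m y *\<^sub>R pd m (nrm X) y) \<bullet> nrm X y"
      unfolding sgrad_def sum_lessThan_2 inner_add_left inner_scaleR_left pd_nrm_orthogonal_nrm[OF y]
      using nrm_orthogonal_pd_X by (simp add: inner_commute)
  qed
qed

lemma Amap_sgrad_gamma_nrm: "y \<in> U \<Longrightarrow> Amap \<gamma> (nrm X y) (sgrad X (\<lambda>y. \<gamma> (nrm X y)) y)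
    = (\<Sum>m<2. xi_tan m y *\<^sub>R pd m (cahn_hoffman \<gamma> X) y)"
proof -
  assume y: "y \<in> U"
  note l = linear_Amap[OF nrm_nonzero[OF y]]
  show ?thesis unfolding sgrad_gamma_nrm[OF y] sum_lessThan_2 linear_add[OF l] linear_scale[OF l] pd_cahn_hoffman[OF y] ..
qed

lemma tdet_pd_cahn_hoffman: "y \<in> U \<Longrightarrow> tdet X (\<lambda>i. pd i (nrm X) y) y * tdet X (\<lambda>i. Amap \<gamma> (nrm X y) (pd i X y)) y
    = tdet X (\<lambda>i. pd i (cahn_hoffman \<gamma> X) y) y"
proof -
  assume y: "y \<in> U"
  define nu_coord where "nu_coord k i = (\<Sum>j<2. ginv X k j y * (pd i (nrm X) y \<bullet> pd j X y))" for k i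
  define AX where "AX k j = Amap \<gamma> (nrm X y) (pd k X y) \<bullet> pd j X y" for k j
  note l = linear_Amap[OF nrm_nonzero[OF y]]
  have xi_exp: "pd i (cahn_hoffman \<gamma> X) y = (\<Sum>k<2. nu_coord k i *\<^sub>R Amap \<gamma> (nrm X y) (pd k X y))" for i
  proof -
    have "pd i (cahn_hoffman \<gamma> X) y = Amap \<gamma> (nrm X y) (pd i (nrm X) y)" by (rule pd_cahn_hoffman[OF y])
    also have "pd i (nrm X) y = (\<Sum>k<2. nu_coord k i *\<^sub>R pd k X y)"
      unfolding nu_coord_def by (rule tangent_vector_expansion[OF y pd_nrm_orthogonal_nrm[OF y]])
    finally show ?thesis unfolding sum_lessThan_2 linear_add[OF l] linear_scale[OF l] .
  qed
  have P: "pd i (cahn_hoffman \<gamma> X) y \<bullet> pd j X y = (\<Sum>k<2. nu_coord k i * AX k j)" for i j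
    unfolding xi_exp sum_lessThan_2 inner_add_left inner_scaleR_left AX_def ..
  show ?thesis
    unfolding tdet_def Let_def P nu_coord_def[symmetric] AX_def[symmetric] sum_lessThan_2
    by (simp add: algebra_simps)
qed

lemma xi_tan_differentiable: "y \<in> U \<Longrightarrow> xi_tan m differentiable at y"
  unfolding xi_tan_def[abs_def]
  by (intro differentiable_sum ballI finite_lessThan
      differentiable_bilinear[OF bounded_bilinear_mult ginv_differentiable
        differentiable_bilinear[OF bounded_bilinear_inner cahn_hoffman_differentiable pd_X_differentiable]])

lemma pd_xi_tan: "y \<in> U \<Longrightarrow> pd i (xi_tan m) y = (\<Sum>p<2. pd i (ginv X m p) y * (cahn_hoffman \<gamma> X y \<bullet> pd p X y)
    + ginv X m p y * (pd i (cahn_hoffman \<gamma> X) y \<bullet> pd p X y + cahn_hoffman \<gamma> X y \<bullet> pd i (pd p X) y))"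
proof -
  assume y: "y \<in> U"
  note d_inner = differentiable_bilinear[OF bounded_bilinear_inner cahn_hoffman_differentiable[OF y] pd_X_differentiable[OF y]]
  have "pd i (xi_tan m) y = (\<Sum>p<2. pd i (\<lambda>y. ginv X m p y * (cahn_hoffman \<gamma> X y \<bullet> pd p X y)) y)"
    unfolding xi_tan_def[abs_def]
    by (intro pd_sum finite_lessThan differentiable_bilinear[OF bounded_bilinear_mult ginv_differentiable[OF y] d_inner])
  then show ?thesis
    by (simp add: pd_bilinear[OF bounded_bilinear_mult ginv_differentiable[OF y] d_inner]
        pd_bilinear[OF bounded_bilinear_inner cahn_hoffman_differentiable[OF y] pd_X_differentiable[OF y]])
qed

lemma pd_sdiv_cahn_hoffman: "y \<in> U \<Longrightarrow> pd m (sdiv X (cahn_hoffman \<gamma> X)) y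
   = (\<Sum>i<2. \<Sum>j<2. pd m (ginv X i j) y * (pd i (cahn_hoffman \<gamma> X) y \<bullet> pd j X y)
        + ginv X i j y * (pd m (pd i (cahn_hoffman \<gamma> X)) y \<bullet> pd j X y + pd i (cahn_hoffman \<gamma> X) y \<bullet> pd m (pd j X) y))"
proof -
  assume y: "y \<in> U"
  note d_inner = differentiable_bilinear[OF bounded_bilinear_inner pd_cahn_hoffman_differentiable[OF y] pd_X_differentiable[OF y]]
  note d_term = differentiable_bilinear[OF bounded_bilinear_mult ginv_differentiable[OF y] d_inner]
  have "pd m (sdiv X (cahn_hoffman \<gamma> X)) y
      = (\<Sum>i<2. \<Sum>j<2. pd m (\<lambda>y. ginv X i j y * (pd i (cahn_hoffman \<gamma> X) y \<bullet> pd j X y)) y)"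
  proof -
    have "pd m (sdiv X (cahn_hoffman \<gamma> X)) y
        = (\<Sum>i<2. pd m (\<lambda>y. \<Sum>j<2. ginv X i j y * (pd i (cahn_hoffman \<gamma> X) y \<bullet> pd j X y)) y)"
      unfolding sdiv_def[abs_def] by (intro pd_sum finite_lessThan differentiable_sum ballI d_term)
    then show ?thesis by (simp add: pd_sum d_term)
  qed
  then show ?thesis
    by (simp add: pd_bilinear[OF bounded_bilinear_mult ginv_differentiable[OF y] d_inner]
        pd_bilinear[OF bounded_bilinear_inner pd_cahn_hoffman_differentiable[OF y] pd_X_differentiable[OF y]])
qed

lemma pd_Amap_sgrad_gamma_nrm:
  assumes y: "y \<in> U"
  shows "pd i (\<lambda>y. Amap \<gamma> (nrm X y) (sgrad X (\<lambda>y. \<gamma> (nrm X y)) y)) y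
    = (\<Sum>m<2. pd i (xi_tan m) y *\<^sub>R pd m (cahn_hoffman \<gamma> X) y + xi_tan m y *\<^sub>R pd i (pd m (cahn_hoffman \<gamma> X)) y)"
proof -
  note d_term = differentiable_bilinear[OF bounded_bilinear_scaleR xi_tan_differentiable[OF y] pd_cahn_hoffman_differentiable[OF y]]
  have "pd i (\<lambda>y. \<Sum>m<2. xi_tan m y *\<^sub>R pd m (cahn_hoffman \<gamma> X) y) y
      = pd i (\<lambda>y. Amap \<gamma> (nrm X y) (sgrad X (\<lambda>y. \<gamma> (nrm X y)) y)) y"
    by (rule pd_cong_open[OF open_U y Amap_sgrad_gamma_nrm[symmetric]])
      (assumption, intro differentiable_sum ballI finite_lessThan d_term)
  moreover have "pd i (\<lambda>y. \<Sum>m<2. xi_tan m y *\<^sub>R pd m (cahn_hoffman \<gamma> X) y) y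
      = (\<Sum>m<2. pd i (\<lambda>y. xi_tan m y *\<^sub>R pd m (cahn_hoffman \<gamma> X) y) y)"
    by (intro pd_sum finite_lessThan d_term)
  ultimately show ?thesis
    by (simp add: pd_bilinear[OF bounded_bilinear_scaleR xi_tan_differentiable[OF y] pd_cahn_hoffman_differentiable[OF y]])
qed

lemma jacobi_gamma_nrm_eq: "y \<in> U \<Longrightarrow> jacobi \<gamma> X (\<lambda>y. \<gamma> (nrm X y)) y
    = (\<Sum>i<2. \<Sum>j<2. ginv X i j y * (\<Sum>m<2. pd i (xi_tan m) y * (pd m (cahn_hoffman \<gamma> X) y \<bullet> pd j X y)
                                       + xi_tan m y * (pd i (pd m (cahn_hoffman \<gamma> X)) y \<bullet> pd j X y)))
      + (\<Sum>i<2. \<Sum>j<2. ginv X i j y * (pd i (cahn_hoffman \<gamma> X) y \<bullet> pd j (nrm X) y)) * (cahn_hoffman \<gamma> X y \<bullet> nrm X y)"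
proof -
  assume y: "y \<in> U"
  show ?thesis
    unfolding jacobi_def sdiv_def dinner_def pd_Amap_sgrad_gamma_nrm[OF y] cahn_hoffman_inner_nrm[OF y]
    by (simp add: inner_sum_left inner_add_left)
qed

definition dxi_coord :: "nat \<Rightarrow> nat \<Rightarrow> real \<times> real \<Rightarrow> real" where
  "dxi_coord k i y = (\<Sum>j<2. ginv X k j y * (pd i (cahn_hoffman \<gamma> X) y \<bullet> pd j X y))"

lemma aniso_mean_curv_eq_trace: "aniso_mean_curv \<gamma> X y = - (dxi_coord 0 0 y + dxi_coord 1 1 y)"
  unfolding aniso_mean_curv_def sdiv_def dxi_coord_def sum_lessThan_2 by simp

lemma gauss_curv_div_wulff_curv_eq_det:
  assumes y: "y \<in> U"
  shows "gauss_curv X y / wulff_curv \<gamma> X y = dxi_coord 0 0 y * dxi_coord 1 1 y - dxi_coord 0 1 y * dxi_coord 1 0 y"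
proof -
  have "gauss_curv X y / wulff_curv \<gamma> X y
      = tdet X (\<lambda>i. pd i (nrm X) y) y * tdet X (\<lambda>i. Amap \<gamma> (nrm X y) (pd i X y)) y"
    unfolding gauss_curv_def wulff_curv_def by simp
  also have "\<dots> = tdet X (\<lambda>i. pd i (cahn_hoffman \<gamma> X) y) y" by (rule tdet_pd_cahn_hoffman[OF y])
  finally show ?thesis unfolding tdet_def Let_def dxi_coord_def .
qed

lemma curvature_rhs_eq_trace_det:
  assumes y: "y \<in> U"
  shows "(aniso_mean_curv \<gamma> X y)^2 - 2 * gauss_curv X y / wulff_curv \<gamma> X y
      = (dxi_coord 0 0 y + dxi_coord 1 1 y)^2
        - 2 * (dxi_coord 0 0 y * dxi_coord 1 1 y - dxi_coord 0 1 y * dxi_coord 1 0 y)"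
proof -
  have "(aniso_mean_curv \<gamma> X y)^2 = (dxi_coord 0 0 y + dxi_coord 1 1 y)^2"
    by (simp add: aniso_mean_curv_eq_trace power2_eq_square algebra_simps)
  moreover have "2 * gauss_curv X y / wulff_curv \<gamma> X y = 2 * (gauss_curv X y / wulff_curv \<gamma> X y)"
    by simp
  ultimately show ?thesis
    unfolding gauss_curv_div_wulff_curv_eq_det[OF y] by simp
qed

text \<open>pd identifies every index i \<noteq> 0 with 1 but ginv does not; clamping the indices lets the
  hypotheses of jacobi_coordinate_identity hold for all natural numbers.\<close>

definition clamp :: "nat \<Rightarrow> nat" where "clamp a = (if a = 0 then 0 else 1)"

lemma clamp_simps [simp]: "clamp 0 = 0" "clamp 1 = 1" "clamp a < 2"
  by (auto simp: clamp_def)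

lemma jacobi_gamma_nrm_pointwise:
  assumes x: "x \<in> U" and const: "\<forall>y\<in>U. aniso_mean_curv \<gamma> X y = \<Lambda>"
  shows "jacobi \<gamma> X (\<lambda>y. \<gamma> (nrm X y)) x = (aniso_mean_curv \<gamma> X x)^2 - 2 * gauss_curv X x / wulff_curv \<gamma> X x"
proof -
  define gi where "gi a b = ginv X (clamp a) (clamp b) x" for a b
  define h where "h a b = nrm X x \<bullet> pd b (pd a X) x" for a b
  define P where "P i j = pd i (cahn_hoffman \<gamma> X) x \<bullet> pd j X x" for i j
  define xiX2 where "xiX2 p i = cahn_hoffman \<gamma> X x \<bullet> pd i (pd p X) x" for p i
  define xinu where "xinu i j = pd i (cahn_hoffman \<gamma> X) x \<bullet> pd j (nrm X) x" for i j
  define dt where "dt m i = pd i (xi_tan (clamp m)) x" for m i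
  define dgi where "dgi m a b = pd m (ginv X (clamp a) (clamp b)) x" for m a b
  define Gm where "Gm a b c = pd b (pd a X) x \<bullet> pd c X x" for a b c
  define Q where "Q m i j = pd i (pd m (cahn_hoffman \<gamma> X)) x \<bullet> pd j X x" for m i j
  define xiiX2 where "xiiX2 i j m = pd i (cahn_hoffman \<gamma> X) x \<bullet> pd m (pd j X) x" for i j m
  define t where "t m = xi_tan (clamp m) x" for m
  define s where "s p = cahn_hoffman \<gamma> X x \<bullet> pd p X x" for p
  define psi where "psi = cahn_hoffman \<gamma> X x \<bullet> nrm X x"
  have gs: "gi 1 0 = gi 0 1" unfolding gi_def clamp_simps ginv_simps ..
  have Gs: "Gm 1 0 c = Gm 0 1 c" for c unfolding Gm_def pd_pd_X_commute[OF x, of 0 1] ..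
  have hs: "h 1 0 = h 0 1" unfolding h_def pd_pd_X_commute[OF x, of 0 1] ..
  have dgiE: "dgi m a b = - (\<Sum>c<2. \<Sum>d<2. gi a c * (Gm c m d + Gm d m c) * gi d b)" for m a b
    unfolding dgi_def gi_def Gm_def pd_ginv[OF x clamp_simps(3) clamp_simps(3)] sum_lessThan_2 clamp_simps pd_gmet[OF x]
    by (simp add: inner_commute)
  have xiX2E: "xiX2 p i = (\<Sum>k<2. \<Sum>l<2. gi k l * s k * Gm p i l) + psi * h p i" for p i
    unfolding xiX2_def gi_def s_def Gm_def psi_def h_def
    using inner_frame_expansion[OF x, of "cahn_hoffman \<gamma> X x" "pd i (pd p X) x"]
    by (simp add: sum_lessThan_2 inner_commute clamp_def)
  have xiiX2E: "xiiX2 i j m = (\<Sum>k<2. \<Sum>l<2. gi k l * P i k * Gm j m l)" for i j m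
    unfolding xiiX2_def gi_def P_def Gm_def
    using inner_frame_expansion[OF x, of "pd i (cahn_hoffman \<gamma> X) x" "pd m (pd j X) x"]
      pd_cahn_hoffman_orthogonal_nrm[OF x, of i]
    by (simp add: sum_lessThan_2 inner_commute clamp_def)
  have xinuE: "xinu i j = - (\<Sum>k<2. \<Sum>l<2. gi k l * P i k * h l j)" for i j
    unfolding xinu_def gi_def P_def h_def
    using inner_frame_expansion[OF x, of "pd i (cahn_hoffman \<gamma> X) x" "pd j (nrm X) x"]
      pd_cahn_hoffman_orthogonal_nrm[OF x, of i]
    by (simp add: sum_lessThan_2 weingarten[OF x] algebra_simps clamp_def)
  have tE: "t m = (\<Sum>p<2. gi m p * s p)" for m
    unfolding t_def xi_tan_def gi_def s_def sum_lessThan_2 clamp_simps ..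
  have dtE: "dt m i = (\<Sum>p<2. dgi i m p * s p + gi m p * (P i p + xiX2 p i))" for m i
    unfolding dt_def pd_xi_tan[OF x] dgi_def gi_def s_def P_def xiX2_def sum_lessThan_2 clamp_simps ..
  have const_pd: "(\<Sum>i<2. \<Sum>j<2. dgi m i j * P i j + gi i j * (Q i m j + xiiX2 i j m)) = 0" for m
  proof -
    have "pd m (sdiv X (cahn_hoffman \<gamma> X)) x = 0"
      by (rule pd_eq_0_if_constant_on[OF open_U x, where c="- \<Lambda>"]) (use const in \<open>auto simp: aniso_mean_curv_def\<close>)
    then show ?thesis
      unfolding pd_sdiv_cahn_hoffman[OF x] dgi_def P_def gi_def Q_def xiiX2_def sum_lessThan_2 clamp_simps .
  qed
  have Qs: "Q m i j = Q i m j" for m i j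
    unfolding Q_def using pd_pd_cahn_hoffman_commute[OF x] by simp
  from jacobi_coordinate_identity[OF gs Gs hs dgiE xiX2E xiiX2E xinuE tE dtE const_pd Qs]
  show ?thesis
    unfolding jacobi_gamma_nrm_eq[OF x] curvature_rhs_eq_trace_det[OF x] gi_def dt_def t_def P_def Q_def xinu_def psi_def dxi_coord_def
      sum_lessThan_2 clamp_simps .
qed

end

theorem lemma0p2:
  fixes X :: "real \<times> real \<Rightarrow> real^3" and U :: "(real \<times> real) set"
    and \<gamma> :: "real^3 \<Rightarrow> real"
  assumes "open U"
    and "Ck 3 X U"
    and "\<forall>x\<in>U. cross3 (pd 0 X x) (pd 1 X x) \<noteq> 0"
    and "\<forall>y\<in>sphere 0 1. \<gamma> y > 0"
    and "Ck 3 (gext \<gamma>) (- {0})"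
    and "\<exists>c. \<forall>x\<in>U. aniso_mean_curv \<gamma> X x = c"
  shows "\<forall>x\<in>U. jacobi \<gamma> X (\<lambda>y. \<gamma> (nrm X y)) x
                = (aniso_mean_curv \<gamma> X x)^2 - 2 * gauss_curv X x / wulff_curv \<gamma> X x"
proof -
  interpret aniso_patch X U \<gamma> using assms(1,2,3,5) by unfold_locales
  obtain \<Lambda> where "\<forall>x\<in>U. aniso_mean_curv \<gamma> X x = \<Lambda>" using assms(6) by blast
  then show ?thesis using jacobi_gamma_nrm_pointwise by blast
qed

end
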